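(* Assume the stent geometry satisfies: whenever real numbers $\alpha_i$, indexed by the straight edges $i$, satisfy \[ \sum_{i\in J_j^+,\ i\text{ straight}}\alpha_i t^i-\sum_{i\in J_j^-,\ i\text{ straight}}\alpha_i t^i=0\quad\text{for all } j=1,\dots,n_{\mathcal V}, \] then $\alpha_i=0$ for all straight edges $i$. Then the bilinear form $a$ is $\operatorname{Ker}B$-elliptic: there exists $c_a>0$ with $a(\Sigma,\Sigma)\ge c_a\|\Sigma\|_V^2$ for all $\Sigma\in\operatorname{Ker}B:=\{\Sigma\in V:\ b(\Sigma,\psi)=0\ \text{for all }\psi\in M\}$.
   Context: Network: a stent is modelled by a finite connected graph with vertices $j=1,\dots,n_{\mathcal V}$ located at points $\mathcal V_j\in\mathbb{R}^3$ and oriented edges $i=1,\dots,n_{\mathcal E}$. $J_j^-$ ($J_j^+$) is the set of edges leaving (entering) vertex $j$. Edge $i$ is a curve of length $\ell^i>0$ with arc-length parametrization $\Phi^i:[0,\ell^i]\to\mathbb{R}^3$ (smooth), $\Phi^i(0)$ the position of the vertex it leaves, $\Phi^i(\ell^i)$ the position of the vertex it enters; $t^i=(\Phi^i)'$. Edge $i$ is called straight if $t^i$ is constant. $Q^i:[0,\ell^i]\to\mathbb{R}^{3\times 3}$ is continuous with orthogonal values and $H^i\in\mathbb{R}^{3\times3}$ is positive definite diagonal. Matrices: $A^+_{I}\in\mathbb{R}^{3n_{\mathcal V}\times 3n_{\mathcal E}}$ has $3\times3$ block $I_3$ in block row $j$, block column $i$ if $i\in J_j^+$ and $0$ otherwise;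 $A^-_I$ likewise with $J_j^-$. Spaces: $L^2(\mathcal N;\mathbb{R}^3)=\prod_iL^2(0,\ell^i;\mathbb{R}^3)$, $L^2_{H^1}(\mathcal N;\mathbb{R}^3)=\prod_iH^1(0,\ell^i;\mathbb{R}^3)$ (no continuity at vertices), product norms; $\int_{\mathcal N}v=\sum_i\int_0^{\ell^i}v^i\,ds$. $V=L^2(\mathcal N;\mathbb{R}^3)^2\times(\mathbb{R}^{3n_{\mathcal E}})^4\times\mathbb{R}^3\times\mathbb{R}^3$ with elements $\Sigma=(q,p,P_+,P_-,Q_+,Q_-,\alpha,\beta)$ (and $\Gamma=(\xi,\theta,\dots)$), $M=L^2_{H^1}(\mathcal N;\mathbb{R}^3)^2\times\mathbb{R}^{3n_{\mathcal V}}\times\mathbb{R}^{3n_{\mathcal V}}$ with elements $\psi=(v,w,V,W)$, both with product Hilbert norms. $a(\Sigma,\Gamma)=\sum_i\int_0^{\ell^i}Q^i(H^i)^{-1}(Q^i)^Tq^i\cdot\xi^i\,ds$; $b(\Sigma,\psi)=\sum_i\int_0^{\ell^i}\big(-p^i\cdot(\partial_sv^i+t^i\times w^i)-q^i\cdot\partial_sw^i\big)ds+\sum_i\big(P^i_+\cdot v^i(\ell^i)-P^i_-\cdot v^i(0)\big)+\sum_i\big(Q^i_+\cdot w^i(\ell^i)-Q^i_-\cdot w^i(0)\big)-(A^+_IP_+-A^-_IP_-)\cdot V-(A^+_IQ_+-A^-_IQ_-)\cdot W+\alpha\cdot\int_{\mathcal N}v+\beta\cdot\int_{\mathcal N}w$.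 *)

theory Defs
  imports "HOL-Analysis.Analysis" "HOL-Analysis.Cross3"
begin

text \<open>Vertices are 0..<nV, edges are 0..<nE. Edge i leaves vertex src i and enters vertex tgt i,
  so J_j^- = {i. src i = j} and J_j^+ = {i. tgt i = j}. Edge i is parametrised on [0, ell i].\<close>

definition graph_connected :: "nat \<Rightarrow> nat \<Rightarrow> (nat \<Rightarrow> nat) \<Rightarrow> (nat \<Rightarrow> nat) \<Rightarrow> bool" where
  "graph_connected nV nE src tgt \<longleftrightarrow>
     (let E = {(src i, tgt i) | i. i < nE} in
      \<forall>j<nV. \<forall>k<nV. (j, k) \<in> (E \<union> E\<inverse>)\<^sup>*)"

definition smooth_on_interval :: "real \<Rightarrow> (real \<Rightarrow> real^3) \<Rightarrow> bool" where
  "smooth_on_interval l f \<longleftrightarrow>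
     (\<exists>D :: nat \<Rightarrow> real \<Rightarrow> real^3. D 0 = f \<and>
        (\<forall>k. \<forall>s\<in>{0..l}. (D k has_vector_derivative D (Suc k) s) (at s within {0..l})))"

definition tangent :: "(real \<Rightarrow> real^3) \<Rightarrow> real \<Rightarrow> real \<Rightarrow> real^3" where
  "tangent f l s = vector_derivative f (at s within {0..l})"

definition straight_edge :: "(nat \<Rightarrow> real) \<Rightarrow> (nat \<Rightarrow> real \<Rightarrow> real^3) \<Rightarrow> nat \<Rightarrow> bool" where
  "straight_edge ell Phi i \<longleftrightarrow> (\<exists>c. \<forall>s\<in>{0..ell i}. tangent (Phi i) (ell i) s = c)"

definition pos_diag :: "real^3^3 \<Rightarrow> bool" where
  "pos_diag H \<longleftrightarrow> (\<forall>a b. a \<noteq> b \<longrightarrow> H $ a $ b = 0) \<and> (\<forall>a. H $ a $ a > 0)"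

definition stent_geometry ::
  "nat \<Rightarrow> nat \<Rightarrow> (nat \<Rightarrow> nat) \<Rightarrow> (nat \<Rightarrow> nat) \<Rightarrow> (nat \<Rightarrow> real^3) \<Rightarrow> (nat \<Rightarrow> real)
   \<Rightarrow> (nat \<Rightarrow> real \<Rightarrow> real^3) \<Rightarrow> (nat \<Rightarrow> real \<Rightarrow> real^3^3) \<Rightarrow> (nat \<Rightarrow> real^3^3) \<Rightarrow> bool" where
  "stent_geometry nV nE src tgt Vpos ell Phi Q H \<longleftrightarrow>
     0 < nE \<and> (\<forall>i<nE. src i < nV \<and> tgt i < nV) \<and> graph_connected nV nE src tgt \<and>
     (\<forall>i<nE. 0 < ell i \<and> smooth_on_interval (ell i) (Phi i) \<and>
        (\<forall>s\<in>{0..ell i}. norm (tangent (Phi i) (ell i) s) = 1) \<and>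
        Phi i 0 = Vpos (src i) \<and> Phi i (ell i) = Vpos (tgt i) \<and>
        continuous_on {0..ell i} (Q i) \<and> (\<forall>s\<in>{0..ell i}. orthogonal_matrix (Q i s)) \<and>
        pos_diag (H i))"

text \<open>L^2(0,l;R^3) (representatives) and H^1(0,l;R^3) given by the absolutely continuous
  representative v together with its weak derivative dv.\<close>
definition L2_on :: "real \<Rightarrow> (real \<Rightarrow> real^3) \<Rightarrow> bool" where
  "L2_on l f \<longleftrightarrow> f measurable_on {0..l} \<and> (\<lambda>s. norm (f s) ^ 2) integrable_on {0..l}"

definition H1_on :: "real \<Rightarrow> (real \<Rightarrow> real^3) \<Rightarrow> (real \<Rightarrow> real^3) \<Rightarrow> bool" where
  "H1_on l v dv \<longleftrightarrow> L2_on l dv \<and> (\<forall>s\<in>{0..l}. v s = v 0 + integral {0..s} dv)"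

definition Aplus :: "nat \<Rightarrow> (nat \<Rightarrow> nat) \<Rightarrow> (nat \<Rightarrow> real^3) \<Rightarrow> nat \<Rightarrow> real^3" where
  "Aplus nE tgt P j = (\<Sum>i | i < nE \<and> tgt i = j. P i)"

definition Aminus :: "nat \<Rightarrow> (nat \<Rightarrow> nat) \<Rightarrow> (nat \<Rightarrow> real^3) \<Rightarrow> nat \<Rightarrow> real^3" where
  "Aminus nE src P j = (\<Sum>i | i < nE \<and> src i = j. P i)"

definition a_form ::
  "nat \<Rightarrow> (nat \<Rightarrow> real) \<Rightarrow> (nat \<Rightarrow> real \<Rightarrow> real^3^3) \<Rightarrow> (nat \<Rightarrow> real^3^3)
   \<Rightarrow> (nat \<Rightarrow> real \<Rightarrow> real^3) \<Rightarrow> (nat \<Rightarrow> real \<Rightarrow> real^3) \<Rightarrow> real" where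
  "a_form nE ell Q H q \<xi> =
     (\<Sum>i<nE. integral {0..ell i}
        (\<lambda>s. ((Q i s ** matrix_inv (H i) ** transpose (Q i s)) *v q i s) \<bullet> \<xi> i s))"

text \<open>b(Sigma, psi) with Sigma = (q,p,Pp,Pm,Qp,Qm,alpha,beta), psi = (v,w,V,W); dv, dw are the
  derivatives of v, w.\<close>
definition b_form ::
  "nat \<Rightarrow> nat \<Rightarrow> (nat \<Rightarrow> nat) \<Rightarrow> (nat \<Rightarrow> nat) \<Rightarrow> (nat \<Rightarrow> real) \<Rightarrow> (nat \<Rightarrow> real \<Rightarrow> real^3)
   \<Rightarrow> (nat \<Rightarrow> real \<Rightarrow> real^3) \<Rightarrow> (nat \<Rightarrow> real \<Rightarrow> real^3)
   \<Rightarrow> (nat \<Rightarrow> real^3) \<Rightarrow> (nat \<Rightarrow> real^3) \<Rightarrow> (nat \<Rightarrow> real^3) \<Rightarrow> (nat \<Rightarrow> real^3) \<Rightarrow> real^3 \<Rightarrow> real^3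
   \<Rightarrow> (nat \<Rightarrow> real \<Rightarrow> real^3) \<Rightarrow> (nat \<Rightarrow> real \<Rightarrow> real^3) \<Rightarrow> (nat \<Rightarrow> real \<Rightarrow> real^3) \<Rightarrow> (nat \<Rightarrow> real \<Rightarrow> real^3)
   \<Rightarrow> (nat \<Rightarrow> real^3) \<Rightarrow> (nat \<Rightarrow> real^3) \<Rightarrow> real" where
  "b_form nV nE src tgt ell Phi q p Pp Pm Qp Qm \<alpha> \<beta> v dv w dw V W =
     (\<Sum>i<nE. integral {0..ell i}
        (\<lambda>s. - (p i s \<bullet> (dv i s + cross3 (tangent (Phi i) (ell i) s) (w i s))) - q i s \<bullet> dw i s))
     + (\<Sum>i<nE. Pp i \<bullet> v i (ell i) - Pm i \<bullet> v i 0)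
     + (\<Sum>i<nE. Qp i \<bullet> w i (ell i) - Qm i \<bullet> w i 0)
     - (\<Sum>j<nV. (Aplus nE tgt Pp j - Aminus nE src Pm j) \<bullet> V j)
     - (\<Sum>j<nV. (Aplus nE tgt Qp j - Aminus nE src Qm j) \<bullet> W j)
     + \<alpha> \<bullet> (\<Sum>i<nE. integral {0..ell i} (v i))
     + \<beta> \<bullet> (\<Sum>i<nE. integral {0..ell i} (w i))"

definition normV_sq ::
  "nat \<Rightarrow> (nat \<Rightarrow> real) \<Rightarrow> (nat \<Rightarrow> real \<Rightarrow> real^3) \<Rightarrow> (nat \<Rightarrow> real \<Rightarrow> real^3)
   \<Rightarrow> (nat \<Rightarrow> real^3) \<Rightarrow> (nat \<Rightarrow> real^3) \<Rightarrow> (nat \<Rightarrow> real^3) \<Rightarrow> (nat \<Rightarrow> real^3) \<Rightarrow> real^3 \<Rightarrow> real^3 \<Rightarrow> real" where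
  "normV_sq nE ell q p Pp Pm Qp Qm \<alpha> \<beta> =
     (\<Sum>i<nE. integral {0..ell i} (\<lambda>s. norm (q i s) ^ 2) + integral {0..ell i} (\<lambda>s. norm (p i s) ^ 2)
        + norm (Pp i) ^ 2 + norm (Pm i) ^ 2 + norm (Qp i) ^ 2 + norm (Qm i) ^ 2)
     + norm \<alpha> ^ 2 + norm \<beta> ^ 2"

end

theory Submission
  imports Defs "HOL-Library.Function_Algebras"
begin

text \<open>Testing b with functions supported at one vertex or on one edge shows that on Ker B the
  end forces satisfy \<open>P\<^sub>- = P\<^sub>+\<close> and balance at every vertex, p equals \<open>P\<^sub>+\<close> on each edge,
  \<open>\<alpha> = \<beta> = 0\<close>, and \<open>Q\<^sub>+ - Q\<^sub>- = P\<^sub>+ \<times> (\<Phi>(l) - \<Phi>(0))\<close>. Testing with a rotation that ramps up on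
  [a, b] shows that q controls the twisted moment \<open>Q\<^sub>+ - P\<^sub>+ \<times> (\<Phi>(l) - \<Phi>(b))\<close> wherever it is large
  compared with its Lipschitz constant. On each edge this bounds \<open>Q\<^sub>\<plusminus>\<close> and the transverse part of
  \<open>P\<^sub>+\<close> by the L2 norm of q: the part orthogonal to the tangent on a straight edge, all of \<open>P\<^sub>+\<close> on a
  curved one, whose chords span two independent directions. The remaining tangential components
  on straight edges satisfy the vertex balance up to controlled terms, so the independence
  hypothesis bounds them as well. Hence the V-norm of \<open>\<Sigma>\<close> is bounded by the L2 norm of q, and a is
  uniformly positive definite in q.\<close>

section \<open>Square-integrable functions on an interval\<close>

lemma integrable_on_interval_if_measurable_bounded:
  fixes f :: "real \<Rightarrow> 'b::euclidean_space"
  assumes "f measurable_on {a..b}" "g integrable_on {a..b}" "\<And>x. x \<in> {a..b} \<Longrightarrow> norm (f x) \<le> g x"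
  shows "f integrable_on {a..b}"
  using measurable_bounded_by_integrable_imp_integrable[of f "{a..b}" g] assms
    measurable_on_iff_borel_measurable[of "{a..b}"] by auto

lemma continuous_on_imp_measurable_on_interval:
  fixes f :: "real \<Rightarrow> 'b::euclidean_space"
  shows "continuous_on {a..b} f \<Longrightarrow> f measurable_on {a..b}"
  using continuous_imp_measurable_on_sets_lebesgue[of "{a..b}" f]
    measurable_on_iff_borel_measurable[of "{a..b}" f] by auto

lemma integrable_on_imp_measurable_on_interval:
  fixes f :: "real \<Rightarrow> 'b::euclidean_space"
  shows "f integrable_on {a..b} \<Longrightarrow> f measurable_on {a..b}"
  using integrable_imp_measurable[of f "{a..b}"] measurable_on_iff_borel_measurable[of "{a..b}" f]
  by auto

lemma measurable_on_inner:
  fixes f g :: "real \<Rightarrow> 'b::euclidean_space"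
  assumes "f measurable_on S" "g measurable_on S"
  shows "(\<lambda>s. f s \<bullet> g s) measurable_on S"
  using measurable_on_bilinear[OF bilinear_conv_bounded_bilinear[THEN iffD2, OF bounded_bilinear_inner] assms] .

lemma measurable_on_power2:
  fixes f :: "real \<Rightarrow> real"
  shows "f measurable_on S \<Longrightarrow> (\<lambda>s. f s ^ 2) measurable_on S"
  using measurable_on_scaleR[of f S f] by (simp add: power2_eq_square)

lemma L2_onI:
  assumes "f measurable_on {0..l}" "g integrable_on {0..l}" "\<And>x. x \<in> {0..l} \<Longrightarrow> norm (f x) ^ 2 \<le> g x"
  shows "L2_on l f"
  unfolding L2_on_def
proof (intro conjI assms)
  have "(\<lambda>x. norm (f x) ^ 2) measurable_on {0..l}"
    using measurable_on_compose_continuous_0[OF assms(1), of "\<lambda>y. norm y ^ 2"]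
    by (simp add: comp_def continuous_intros)
  then show "(\<lambda>s. norm (f s) ^ 2) integrable_on {0..l}"
    by (rule integrable_on_interval_if_measurable_bounded[OF _ assms(2)]) (use assms(3) in auto)
qed

lemma L2_on_measurable: "L2_on l f \<Longrightarrow> f measurable_on {0..l}"
  by (simp add: L2_on_def)

lemma L2_on_norm_sq_integrable: "L2_on l f \<Longrightarrow> (\<lambda>s. norm (f s) ^ 2) integrable_on {0..l}"
  by (simp add: L2_on_def)

lemma L2_on_norm_sq_integral_nonneg: "L2_on l f \<Longrightarrow> 0 \<le> integral {0..l} (\<lambda>s. norm (f s) ^ 2)"
  by (simp add: L2_on_norm_sq_integrable integral_nonneg)

lemma L2_on_inner_integrable:
  assumes "L2_on l f" "L2_on l g"
  shows "(\<lambda>s. f s \<bullet> g s) integrable_on {0..l}"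
proof (rule integrable_on_interval_if_measurable_bounded)
  show "(\<lambda>s. f s \<bullet> g s) measurable_on {0..l}"
    using assms by (intro measurable_on_inner L2_on_measurable)
  show "(\<lambda>x. (norm (f x) ^ 2 + norm (g x) ^ 2) / 2) integrable_on {0..l}"
    using assms unfolding L2_on_def by (intro integrable_on_divide integrable_add) auto
  fix x
  have "norm (f x \<bullet> g x) \<le> norm (f x) * norm (g x)"
    using Cauchy_Schwarz_ineq2 by simp
  moreover have "0 \<le> (norm (f x) - norm (g x))^2" by simp
  ultimately show "norm (f x \<bullet> g x) \<le> (norm (f x) ^ 2 + norm (g x) ^ 2) / 2"
    by (simp add: power2_eq_square algebra_simps)
qed

lemma L2_on_add:
  assumes "L2_on l f" "L2_on l g"
  shows "L2_on l (\<lambda>s. f s + g s)"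
proof (rule L2_onI)
  show "(\<lambda>s. f s + g s) measurable_on {0..l}" using assms by (intro measurable_on_add L2_on_measurable)
  show "(\<lambda>x. 2 * norm (f x) ^ 2 + 2 * norm (g x) ^ 2) integrable_on {0..l}"
    using assms unfolding L2_on_def by (intro integrable_add integrable_on_mult_right) auto
  fix x
  have "norm (f x + g x) ^ 2 \<le> (norm (f x) + norm (g x))^2"
    by (simp add: power_mono norm_triangle_ineq)
  also have "\<dots> \<le> 2 * norm (f x) ^ 2 + 2 * norm (g x) ^ 2"
    using sum_squares_bound[of "norm (f x)" "norm (g x)"] by (simp add: power2_eq_square algebra_simps)
  finally show "norm (f x + g x) ^ 2 \<le> 2 * norm (f x) ^ 2 + 2 * norm (g x) ^ 2" .
qed

lemma L2_on_scaleR: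
  assumes "L2_on l f"
  shows "L2_on l (\<lambda>s. c *\<^sub>R f s)"
proof (rule L2_onI)
  show "(\<lambda>s. c *\<^sub>R f s) measurable_on {0..l}"
    using assms by (intro measurable_on_scaleR_const L2_on_measurable)
  show "(\<lambda>x. c^2 * norm (f x) ^ 2) integrable_on {0..l}"
    using assms unfolding L2_on_def by (intro integrable_on_mult_right) auto
qed (simp add: power_mult_distrib)

lemma L2_on_diff:
  assumes "L2_on l f" "L2_on l g"
  shows "L2_on l (\<lambda>s. f s - g s)"
  using L2_on_add[OF assms(1) L2_on_scaleR[OF assms(2), of "-1"]] by simp

lemma L2_on_if_integrable_bounded:
  assumes "f integrable_on {0..l}" "\<And>x. x \<in> {0..l} \<Longrightarrow> norm (f x) \<le> B"
  shows "L2_on l f"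
proof (rule L2_onI)
  show "f measurable_on {0..l}" by (rule integrable_on_imp_measurable_on_interval[OF assms(1)])
  show "(\<lambda>x. B^2) integrable_on {0..l}" by (rule integrable_const_ivl)
  fix x assume "x \<in> {0..l}"
  then show "norm (f x) ^ 2 \<le> B^2" using assms(2) by (simp add: power_mono)
qed

lemma L2_on_continuous:
  assumes "continuous_on {0..l} f"
  shows "L2_on l f"
proof -
  obtain B where "\<forall>x\<in>{0..l}. norm (f x) \<le> B"
    using compact_imp_bounded[OF compact_continuous_image[OF assms compact_Icc]]
    by (auto simp: bounded_iff)
  then show ?thesis
    using L2_on_if_integrable_bounded integrable_continuous_interval[OF assms] by blast
qed

lemma L2_on_const: "L2_on l (\<lambda>s. c)"
  by (rule L2_on_continuous) simp

lemma L2_on_integrable: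
  assumes "L2_on l f"
  shows "f integrable_on {0..l}"
proof (rule integrable_on_interval_if_measurable_bounded)
  show "f measurable_on {0..l}" using assms by (rule L2_on_measurable)
  show "(\<lambda>x. (1 + norm (f x) ^ 2) / 2) integrable_on {0..l}"
    using assms unfolding L2_on_def by (intro integrable_on_divide integrable_add) auto
  fix x
  have "0 \<le> (norm (f x) - 1)^2" by simp
  then show "norm (f x) \<le> (1 + norm (f x) ^ 2) / 2" by (simp add: power2_eq_square algebra_simps)
qed

lemma nonneg_quadratic_imp_linear_coeff_eq_0:
  fixes X Y :: real
  assumes "Y \<ge> 0" "\<And>c. 0 \<le> 2 * c * X + c^2 * Y"
  shows "X = 0"
proof -
  let ?c = "- X / (Y + 1)"
  have Y1: "Y + 1 \<noteq> 0" using assms(1) by linarith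
  have "0 \<le> 2 * ?c * X + ?c^2 * Y" by (rule assms(2))
  also have "\<dots> = (2 * (- X) * X * (Y + 1) + X^2 * Y) / (Y + 1)^2"
    using Y1 by (simp add: power2_eq_square diff_divide_distrib add_divide_distrib)
  also have "\<dots> = - (X^2 * (Y + 2)) / (Y + 1)^2"
    by (simp add: power2_eq_square algebra_simps)
  finally have "X^2 * (Y + 2) \<le> 0"
    using Y1 by (simp add: divide_le_0_iff)
  then have "X^2 \<le> 0" using assms(1)
    by (metis add_nonneg_pos mult_le_0_iff not_le zero_less_numeral zero_le_power2 order_antisym)
  then show ?thesis by simp
qed

lemma integral_inner_eq_0_if_norm_sq_integral_eq_0:
  assumes u: "L2_on l u" and h: "L2_on l h" and u0: "integral {0..l} (\<lambda>s. norm (u s) ^ 2) = 0"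
  shows "integral {0..l} (\<lambda>s. u s \<bullet> h s) = 0"
proof (rule nonneg_quadratic_imp_linear_coeff_eq_0)
  show "0 \<le> integral {0..l} (\<lambda>s. norm (h s) ^ 2)"
    by (rule L2_on_norm_sq_integral_nonneg[OF h])
  fix c :: real
  have expand: "norm (u s + c *\<^sub>R h s) ^ 2 = norm (u s) ^ 2 + (2 * c) * (u s \<bullet> h s) + c^2 * norm (h s) ^ 2" for s
    by (simp only: power2_norm_eq_inner)
      (simp add: inner_add_left inner_add_right inner_commute algebra_simps power2_eq_square)
  have "0 \<le> integral {0..l} (\<lambda>s. norm (u s + c *\<^sub>R h s) ^ 2)"
    by (rule L2_on_norm_sq_integral_nonneg[OF L2_on_add[OF u L2_on_scaleR[OF h]]])
  also have "\<dots> = integral {0..l} (\<lambda>s. norm (u s) ^ 2) + (2 * c) * integral {0..l} (\<lambda>s. u s \<bullet> h s)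
      + c^2 * integral {0..l} (\<lambda>s. norm (h s) ^ 2)"
    unfolding expand using L2_on_norm_sq_integrable[OF u] L2_on_inner_integrable[OF u h] L2_on_norm_sq_integrable[OF h]
    by (simp add: integral_add integral_mult_right integrable_add integrable_on_mult_right)
  finally show "0 \<le> 2 * c * integral {0..l} (\<lambda>s. u s \<bullet> h s) + c^2 * integral {0..l} (\<lambda>s. norm (h s) ^ 2)"
    using u0 by simp
qed

lemma integral_squared_le:
  fixes f :: "real \<Rightarrow> real"
  assumes ab: "a < b" and f: "f integrable_on {a..b}" and f2: "(\<lambda>x. f x ^ 2) integrable_on {a..b}"
  shows "(integral {a..b} f)^2 \<le> (b - a) * integral {a..b} (\<lambda>x. f x ^ 2)"
proof -
  define I where "I = integral {a..b} f"
  define \<mu> where "\<mu> = I / (b - a)"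
  have "0 \<le> integral {a..b} (\<lambda>x. f x ^ 2 + (- 2 * \<mu>) * f x + \<mu>^2)"
  proof (rule integral_nonneg)
    show "(\<lambda>x. f x ^ 2 + (- 2 * \<mu>) * f x + \<mu>^2) integrable_on {a..b}"
      using f f2 by (intro integrable_add integrable_on_mult_right) auto
    have "f x ^ 2 + (- 2 * \<mu>) * f x + \<mu>^2 = (f x - \<mu>)^2" for x
      by (simp add: power2_eq_square algebra_simps)
    then show "0 \<le> f x ^ 2 + (- 2 * \<mu>) * f x + \<mu>^2" for x
      by simp
  qed
  also have "\<dots> = integral {a..b} (\<lambda>x. f x ^ 2 + (- 2 * \<mu>) * f x) + integral {a..b} (\<lambda>x. \<mu>^2)"
    using f f2 by (intro integral_add integrable_add integrable_on_mult_right) auto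
  also have "\<dots> = integral {a..b} (\<lambda>x. f x ^ 2) + (- 2 * \<mu>) * I + \<mu>^2 * (b - a)"
    using ab unfolding I_def
    by (simp only: integral_add[OF f2 integrable_on_mult_right[OF f]] integral_mult_right) simp
  also have "\<dots> = integral {a..b} (\<lambda>x. f x ^ 2) - \<mu> * I"
  proof -
    have "\<mu> * (b - a) = I" using ab by (simp add: \<mu>_def)
    then show ?thesis by (simp add: power2_eq_square algebra_simps)
  qed
  also have "\<mu> * I = I^2 / (b - a)"
    by (simp add: \<mu>_def power2_eq_square)
  finally show ?thesis
    using ab unfolding I_def by (simp add: field_simps)
qed

lemma inner_integral_left:
  assumes "f integrable_on S"
  shows "c \<bullet> integral S f = integral S (\<lambda>s. c \<bullet> f s)"
  using integral_linear[OF assms bounded_linear_inner_right[of c]] by (simp add: comp_def)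

lemma integral_inner_unit_squared_le:
  assumes q: "L2_on l q" and e: "norm e = 1" and ab: "0 \<le> a" "a < b" "b \<le> l"
  shows "(integral {a..b} (\<lambda>s. q s \<bullet> e))^2 \<le> (b - a) * integral {0..l} (\<lambda>s. norm (q s)^2)"
proof -
  have inner_le: "(q s \<bullet> e)^2 \<le> norm (q s)^2" for s
    using Cauchy_Schwarz_ineq2[of "q s" e] e by (metis abs_le_square_iff abs_norm_cancel mult_1_right)
  have "(\<lambda>s. q s \<bullet> e) integrable_on {a..b}"
    by (rule integrable_subinterval_real[OF L2_on_inner_integrable[OF q L2_on_const]]) (use ab in auto)
  moreover have "(\<lambda>s. (q s \<bullet> e)^2) integrable_on {0..l}"
    by (rule integrable_on_interval_if_measurable_bounded[OF _ L2_on_norm_sq_integrable[OF q]])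
      (auto simp: inner_le measurable_on_power2 measurable_on_inner L2_on_measurable[OF q])
  then have "(\<lambda>s. (q s \<bullet> e)^2) integrable_on {a..b}"
    by (rule integrable_subinterval_real) (use ab in auto)
  ultimately have "(integral {a..b} (\<lambda>s. q s \<bullet> e))^2 \<le> (b - a) * integral {a..b} (\<lambda>s. (q s \<bullet> e)^2)"
    by (rule integral_squared_le[OF ab(2)])
  also have "\<dots> \<le> (b - a) * integral {0..l} (\<lambda>s. norm (q s)^2)"
  proof (rule mult_left_mono)
    have "(\<lambda>s. norm (q s)^2) integrable_on {a..b}"
      by (rule integrable_subinterval_real[OF L2_on_norm_sq_integrable[OF q]]) (use ab in auto)
    then have "integral {a..b} (\<lambda>s. (q s \<bullet> e)^2) \<le> integral {a..b} (\<lambda>s. norm (q s)^2)"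
      using \<open>(\<lambda>s. (q s \<bullet> e)^2) integrable_on {a..b}\<close> inner_le by (intro integral_le) auto
    also have "\<dots> \<le> integral {0..l} (\<lambda>s. norm (q s)^2)"
      using ab \<open>(\<lambda>s. norm (q s)^2) integrable_on {a..b}\<close>
      by (intro integral_subset_le L2_on_norm_sq_integrable[OF q]) auto
    finally show "integral {a..b} (\<lambda>s. (q s \<bullet> e)^2) \<le> integral {0..l} (\<lambda>s. norm (q s)^2)" .
  qed (use ab in simp)
  finally show ?thesis .
qed

lemma H1_on_const: "H1_on l (\<lambda>s. a) (\<lambda>s. 0)"
  by (simp add: H1_on_def L2_on_const)

lemma H1_on_linear: "H1_on l (\<lambda>s. s *\<^sub>R e) (\<lambda>s. e)"
  by (auto simp: H1_on_def L2_on_const)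

lemma H1_on_primitive: "L2_on l d \<Longrightarrow> H1_on l (\<lambda>s. integral {0..s} d) d"
  by (simp add: H1_on_def)

definition ramp :: "real \<Rightarrow> real \<Rightarrow> real \<Rightarrow> real" where
  "ramp a b s = min s b - min s a"

lemma H1_on_ramp:
  assumes "0 \<le> a" "a \<le> b"
  shows "H1_on l (\<lambda>s. ramp a b s *\<^sub>R e) (\<lambda>s. if s \<in> {a..b} then e else 0)"
  unfolding H1_on_def
proof (intro conjI ballI)
  have "(\<lambda>s. if s \<in> {a..b} then e else 0) integrable_on {0..l}"
    unfolding integrable_restrict_Int Int_atLeastAtMost by (rule integrable_const_ivl)
  then show "L2_on l (\<lambda>s. if s \<in> {a..b} then e else 0)"
    by (rule L2_on_if_integrable_bounded[of _ _ "norm e"]) auto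
  fix s :: real assume s: "s \<in> {0..l}"
  have "integral {0..s} (\<lambda>r. if r \<in> {a..b} then e else 0) = integral ({a..b} \<inter> {0..s}) (\<lambda>r. e)"
    by (rule integral_restrict_Int)
  also have "\<dots> = ramp a b s *\<^sub>R e"
    using assms s by (auto simp: ramp_def min_def max_def)
  finally show "ramp a b s *\<^sub>R e = ramp a b 0 *\<^sub>R e + integral {0..s} (\<lambda>r. if r \<in> {a..b} then e else 0)"
    using assms by (simp add: ramp_def)
qed

section \<open>Cross products\<close>

lemma bounded_bilinear_cross3: "bounded_bilinear cross3"
  using bilinear_conv_bounded_bilinear bilinear_cross by blast

lemmas bounded_linear_cross3_left = bounded_bilinear.bounded_linear_left[OF bounded_bilinear_cross3]
lemmas bounded_linear_cross3_right = bounded_bilinear.bounded_linear_right[OF bounded_bilinear_cross3]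

lemma norm_cross3_le: "norm (cross3 x y) \<le> norm x * norm y"
proof -
  have "(norm (cross3 x y))^2 \<le> (norm x * norm y)^2"
    using norm_cross[of x y] by (simp add: power_mult_distrib)
  then show ?thesis by (rule power2_le_imp_le) simp
qed

lemma cross3_eq_0_imp_parallel:
  fixes P u :: "real^3"
  assumes "P \<noteq> 0" "cross3 P u = 0"
  shows "u = ((P \<bullet> u) / (P \<bullet> P)) *\<^sub>R P"
proof -
  have "cross3 P (cross3 P u) = (P \<bullet> u) *\<^sub>R P - (P \<bullet> P) *\<^sub>R u"
    by (rule Lagrange)
  with assms(2) have "(P \<bullet> P) *\<^sub>R u = (P \<bullet> u) *\<^sub>R P" by simp
  moreover have "P \<bullet> P \<noteq> 0" using assms(1) by simp
  ultimately show ?thesis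
    by (metis (no_types, lifting) divide_inverse_commute scaleR_scaleR inverse_eq_divide
        left_inverse scaleR_one mult.commute)
qed

lemma cross3_eq_0_if_both_parallel:
  fixes P u v :: "real^3"
  assumes "P \<noteq> 0" "cross3 P u = 0" "cross3 P v = 0"
  shows "cross3 u v = 0"
  by (subst cross3_eq_0_imp_parallel[OF assms(1,2)], subst cross3_eq_0_imp_parallel[OF assms(1,3)])
    (simp add: cross_mult_left cross_mult_right)

lemma norm_le_cross3_if_trivial_kernel:
  fixes u v :: "real^3"
  assumes kernel: "\<And>P. cross3 P u = 0 \<Longrightarrow> cross3 P v = 0 \<Longrightarrow> P = 0"
  shows "\<exists>K>0. \<forall>P. norm P \<le> K * (norm (cross3 P u) + norm (cross3 P v))"
proof -
  let ?f = "\<lambda>P. norm (cross3 P u) + norm (cross3 P v)"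
  have "(axis 1 1 :: real^3) \<in> sphere 0 1" by simp
  then obtain P0 where P0: "P0 \<in> sphere (0::real^3) 1" "\<forall>P\<in>sphere 0 1. ?f P0 \<le> ?f P"
    using continuous_attains_inf[OF compact_sphere _ continuous_on_add[OF
        continuous_on_norm[OF continuous_on_cross] continuous_on_norm[OF continuous_on_cross]]]
    by (metis continuous_on_const continuous_on_id empty_iff)
  define m where "m = ?f P0"
  have "m > 0" unfolding m_def using kernel[of P0] P0(1)
    by (metis add_pos_nonneg add_nonneg_pos norm_ge_zero zero_less_norm_iff mem_sphere_0 norm_zero zero_neq_one)
  have "norm P \<le> (1/m) * ?f P" for P
  proof (cases "P = 0")
    case False
    have "(1 / norm P) *\<^sub>R P \<in> sphere 0 1" using False by simp
    then have "m \<le> ?f ((1 / norm P) *\<^sub>R P)" using P0(2) m_def by blast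
    also have "\<dots> = (1 / norm P) * ?f P"
      by (simp add: cross_mult_left distrib_left)
    finally have "m * norm P \<le> ?f P" using False by (simp add: field_simps)
    then show ?thesis using \<open>m > 0\<close> by (simp add: field_simps)
  qed simp
  then show ?thesis using \<open>m > 0\<close> by (intro exI[of _ "1/m"]) auto
qed

lemma norm_diff_proj_eq_norm_cross3:
  fixes P u :: "real^3"
  assumes "norm u = 1"
  shows "norm (P - (P \<bullet> u) *\<^sub>R u) = norm (cross3 P u)"
proof -
  have uu: "u \<bullet> u = 1" using assms by (simp add: power2_norm_eq_inner[symmetric])
  have "norm (P - (P \<bullet> u) *\<^sub>R u)^2 = norm P ^ 2 - (P \<bullet> u)^2"
    by (simp only: power2_norm_eq_inner)
      (simp add: inner_diff_left inner_diff_right uu inner_commute power2_eq_square algebra_simps)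
  also have "\<dots> = norm (cross3 P u)^2" using norm_cross[of P u] assms by simp
  finally show ?thesis by (simp add: power2_eq_iff_nonneg)
qed

section \<open>Ramp estimates on a regular curve\<close>

lemma finite_obtains_max:
  fixes f :: "'a \<Rightarrow> 'b::linorder"
  assumes "finite F" "F \<noteq> {}"
  obtains b where "b \<in> F" "\<And>x. x \<in> F \<Longrightarrow> f x \<le> f b"
proof -
  have "Max (f ` F) \<in> f ` F" using assms by simp
  then obtain b where "b \<in> F" "f b = Max (f ` F)" by auto
  with assms show ?thesis using that by auto
qed

text \<open>For a straight edge with tangent c, only the part of P orthogonal to c is seen by the
  twisting term \<open>cross3 P (Phi y - Phi x)\<close>; on a curved edge all of P is.\<close>
definition transverse_norm :: "real \<Rightarrow> (real \<Rightarrow> real^3) \<Rightarrow> real^3 \<Rightarrow> real" where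
  "transverse_norm l t P = (if \<exists>c. \<forall>s\<in>{0..l}. t s = c then norm (cross3 P (t 0)) else norm P)"

text \<open>The inequalities that testing Ker B with a rotation ramping up on [a, b] yields for the
  twisted moment \<open>g b = Q\<^sub>+ - P \<times> (Phi l - Phi b)\<close>, where L is a Lipschitz constant of g and
  N the squared L2 norm of q.\<close>
definition ramp_estimates :: "real \<Rightarrow> real \<Rightarrow> (real \<Rightarrow> 'a::real_normed_vector) \<Rightarrow> real \<Rightarrow> bool" where
  "ramp_estimates l L g N \<longleftrightarrow> (\<forall>a b. 0 \<le> a \<longrightarrow> a < b \<longrightarrow> b \<le> l \<longrightarrow> (b - a) * L \<le> norm (g b) \<longrightarrow>
     (b - a) * (norm (g b) - (b - a) * L)^2 \<le> N)"

text \<open>Where norm (g b) dominates L, g stays above 3/4 of norm (g b) on an interval of length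
  \<open>\<delta>\<close> next to b, and the ramp estimate on that interval bounds norm (g b).\<close>
lemma ramp_estimates_imp_bound:
  fixes g :: "real \<Rightarrow> 'a::real_normed_vector"
  assumes l: "0 < l" and L: "0 \<le> L"
    and lipschitz: "\<And>x y. x \<in> {0..l} \<Longrightarrow> y \<in> {0..l} \<Longrightarrow> norm (g x - g y) \<le> \<bar>x - y\<bar> * L"
    and ramp: "ramp_estimates l L g N"
    and b: "b \<in> {0..l}" and K: "0 < K" and LK: "L \<le> K * norm (g b)"
  shows "norm (g b)^2 \<le> 4 * N / min (l/2) (1/(4*K))"
proof -
  define \<delta> where "\<delta> = min (l/2) (1/(4*K))"
  define G where "G = norm (g b)"
  have \<delta>: "0 < \<delta>" "\<delta> \<le> l/2" using l K by (auto simp: \<delta>_def)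
  have \<delta>K: "\<delta> * K \<le> 1/4" using K by (simp add: \<delta>_def min_def field_simps split: if_splits)
  have "\<delta> * L \<le> \<delta> * K * G" using LK \<delta> by (simp add: G_def mult.assoc)
  also have "\<dots> \<le> 1/4 * G" by (rule mult_right_mono[OF \<delta>K]) (simp add: G_def)
  finally have \<delta>L: "\<delta> * L \<le> G / 4" by simp
  obtain a b' where ab: "0 \<le> a" "a < b'" "b' \<le> l" "b' - a = \<delta>" "\<bar>b' - b\<bar> \<le> \<delta>"
  proof (cases "\<delta> \<le> b")
    case True
    then show ?thesis using that[of "b - \<delta>" b] b \<delta> by auto
  next
    case False
    then show ?thesis using that[of b "b + \<delta>"] b \<delta> by auto
  qed
  have "norm (g b - g b') \<le> \<delta> * L"
    using lipschitz[OF b, of b'] ab L by (auto simp: abs_minus_commute intro: order_trans mult_right_mono)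
  then have gb': "norm (g b') \<ge> 3/4 * G"
    using \<delta>L norm_triangle_sub[of "g b" "g b'"] unfolding G_def by (simp add: norm_minus_commute)
  moreover have "0 \<le> G" by (simp add: G_def)
  ultimately have "(b' - a) * L \<le> norm (g b')"
    using \<delta>L ab(4) by simp
  then have "\<delta> * (norm (g b') - \<delta> * L)^2 \<le> N"
    using ramp ab unfolding ramp_estimates_def by auto
  moreover have "(G/2)^2 \<le> (norm (g b') - \<delta> * L)^2"
    using gb' \<delta>L by (intro power_mono) (auto simp: G_def)
  ultimately have "\<delta> * (G/2)^2 \<le> N"
    by (meson \<delta>(1) less_eq_real_def mult_left_mono order_trans)
  then have "G^2 \<le> 4 * N / \<delta>"
    using \<delta>(1) by (simp add: field_simps power2_eq_square)
  then show ?thesis by (simp add: G_def \<delta>_def)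
qed

definition ramp_controlled :: "real \<Rightarrow> (real \<Rightarrow> real^3) \<Rightarrow> (real \<Rightarrow> real^3) \<Rightarrow> real \<Rightarrow> bool" where
  "ramp_controlled l Phi t C \<longleftrightarrow> (\<forall>P Qp N.
     ramp_estimates l (transverse_norm l t P) (\<lambda>b. Qp - cross3 P (Phi l - Phi b)) N \<longrightarrow>
     (transverse_norm l t P)^2 \<le> C * N \<and> (norm Qp)^2 \<le> C * N \<and>
     (norm (Qp - cross3 P (Phi l - Phi 0)))^2 \<le> C * N)"

locale regular_curve =
  fixes l :: real and Phi t :: "real \<Rightarrow> real^3"
  assumes l_pos: "0 < l"
    and has_tangent: "\<And>s. s \<in> {0..l} \<Longrightarrow> (Phi has_vector_derivative t s) (at s within {0..l})"
    and tangent_continuous: "continuous_on {0..l} t"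
    and tangent_unit: "\<And>s. s \<in> {0..l} \<Longrightarrow> norm (t s) = 1"
begin

lemma has_integral_tangent:
  assumes "0 \<le> x" "x \<le> y" "y \<le> l"
  shows "(t has_integral (Phi y - Phi x)) {x..y}"
proof (rule fundamental_theorem_of_calculus[OF assms(2)])
  fix s assume s: "s \<in> {x..y}"
  then have "s \<in> {0..l}" using assms by auto
  from has_tangent[OF this] show "(Phi has_vector_derivative t s) (at s within {x..y})"
    by (rule has_vector_derivative_within_subset) (use assms in auto)
qed

lemma integral_inner_cross3_tangent:
  assumes "0 \<le> x" "x \<le> y" "y \<le> l"
  shows "integral {x..y} (\<lambda>s. P \<bullet> cross3 (t s) e) = cross3 P (Phi y - Phi x) \<bullet> e"
proof -
  have "((\<lambda>s. P \<bullet> cross3 (t s) e) has_integral P \<bullet> cross3 (Phi y - Phi x) e) {x..y}"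
    using has_integral_linear[OF has_integral_linear[OF has_integral_tangent[OF assms]
          bounded_linear_cross3_left[of e]] bounded_linear_inner_right[of P]]
    by (simp add: comp_def)
  then show ?thesis
    by (metis integral_unique cross_triple inner_commute)
qed

lemma norm_cross3_chord_le:
  assumes L: "\<And>s. s \<in> {0..l} \<Longrightarrow> norm (cross3 P (t s)) \<le> L"
    and x: "x \<in> {0..l}" and y: "y \<in> {0..l}"
  shows "norm (cross3 P (Phi y - Phi x)) \<le> \<bar>y - x\<bar> * L"
proof -
  have L0: "0 \<le> L" using L[of 0] l_pos by (meson atLeastAtMost_iff less_eq_real_def norm_ge_zero order_trans)
  have ordered: "norm (cross3 P (Phi b - Phi a)) \<le> (b - a) * L"
    if "a \<in> {0..l}" "b \<in> {0..l}" "a \<le> b" for a b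
  proof -
    have int: "((\<lambda>s. cross3 P (t s)) has_integral cross3 P (Phi b - Phi a)) {a..b}"
      using has_integral_linear[OF has_integral_tangent bounded_linear_cross3_right[of P]] that
      by (simp add: comp_def)
    have "norm (cross3 P (Phi b - Phi a)) \<le> L * Henstock_Kurzweil_Integration.content (cbox a b)"
      by (rule has_integral_bound[OF L0]) (use int that L in \<open>auto simp: cbox_interval\<close>)
    then show ?thesis using that by (simp add: mult.commute)
  qed
  show ?thesis
  proof (cases "x \<le> y")
    case False
    then have "norm (cross3 P (Phi x - Phi y)) \<le> (x - y) * L" using ordered[OF y x] by simp
    then show ?thesis using False
      by (metis abs_minus_commute abs_of_nonneg cross_minus_right diff_ge_0_iff_ge minus_diff_eq
          nle_le norm_minus_cancel)
  qed (use ordered[OF x y] in simp)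
qed

lemma chord_if_tangent_const:
  assumes c: "\<And>s. s \<in> {0..l} \<Longrightarrow> t s = c" and x: "x \<in> {0..l}" and y: "y \<in> {0..l}"
  shows "Phi y - Phi x = (y - x) *\<^sub>R c"
proof -
  have ordered: "Phi b - Phi a = (b - a) *\<^sub>R c" if "a \<in> {0..l}" "b \<in> {0..l}" "a \<le> b" for a b
  proof -
    have "((\<lambda>s. c) has_integral ((b - a) *\<^sub>R c)) {a..b}"
      using has_integral_const_real[of c a b] that by simp
    then have "(t has_integral ((b - a) *\<^sub>R c)) {a..b}"
      by (rule has_integral_eq[rotated]) (use c that in auto)
    moreover have "(t has_integral (Phi b - Phi a)) {a..b}"
      using has_integral_tangent that by simp
    ultimately show ?thesis
      by (rule has_integral_unique[rotated])
  qed
  show ?thesis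
  proof (cases "x \<le> y")
    case False
    then have "Phi x - Phi y = (x - y) *\<^sub>R c" using ordered[OF y x] by simp
    then show ?thesis by (metis minus_diff_eq scaleR_minus_left)
  qed (use ordered[OF x y] in simp)
qed

lemma vector_derivative_unique:
  assumes "s \<in> {0..l}"
    and "(f has_vector_derivative a) (at s within {0..l})" "(f has_vector_derivative b) (at s within {0..l})"
  shows "a = b"
  using vector_derivative_unique_within_closed_interval[of 0 l s f a b] l_pos assms
  unfolding cbox_interval by blast

lemma exists_nonzero_chord: "\<exists>b\<in>{0..l}. Phi b \<noteq> Phi 0"
proof (rule ccontr)
  have l0: "(0::real) \<in> {0..l}" using l_pos by auto
  assume "\<not> (\<exists>b\<in>{0..l}. Phi b \<noteq> Phi 0)"
  then have "Phi 0 = Phi s" if "s \<in> {0..l}" for s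
    using that by metis
  then have "((\<lambda>s. Phi 0) has_vector_derivative t 0) (at 0 within {0..l})"
    by (rule has_vector_derivative_transform[OF l0 _ has_tangent[OF l0]])
  then have "t 0 = 0"
    by (rule vector_derivative_unique[OF l0 _ has_vector_derivative_const])
  with tangent_unit[OF l0] show False by simp
qed

text \<open>The unit tangent is then parallel to u, hence \<open>\<plusminus>u / norm u\<close>, and by continuity the sign
  cannot change.\<close>
lemma tangent_const_if_chords_parallel:
  assumes u: "u \<noteq> 0" and parallel: "\<And>s. s \<in> {0..l} \<Longrightarrow> cross3 (Phi s - Phi 0) u = 0"
  shows "\<exists>c. \<forall>s\<in>{0..l}. t s = c"
proof -
  have "cross3 (t s) u = 0" if s: "s \<in> {0..l}" for s
  proof -
    have "((\<lambda>x. cross3 (Phi x - Phi 0) u) has_vector_derivative cross3 (t s) u) (at s within {0..l})"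
      using bounded_linear.has_vector_derivative[OF bounded_linear_cross3_left
          has_vector_derivative_diff[OF has_tangent[OF s] has_vector_derivative_const[of "Phi 0"]]]
      by simp
    then have "((\<lambda>x. 0) has_vector_derivative cross3 (t s) u) (at s within {0..l})"
      by (rule has_vector_derivative_transform[OF s, rotated]) (simp add: parallel)
    then show ?thesis
      by (rule vector_derivative_unique[OF s _ has_vector_derivative_const])
  qed
  then have par: "t s = ((u \<bullet> t s) / (u \<bullet> u)) *\<^sub>R u" if "s \<in> {0..l}" for s
    using cross3_eq_0_imp_parallel[OF u] cross_skew[of "t s" u] that by simp
  define \<phi> where "\<phi> s = u \<bullet> t s" for s
  have abs_\<phi>: "\<bar>\<phi> s\<bar> = norm u" if s: "s \<in> {0..l}" for s
  proof -
    have "1 = norm (t s)" using tangent_unit[OF s] by simp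
    also have "\<dots> = \<bar>\<phi> s\<bar> / (u \<bullet> u) * norm u"
      by (subst par[OF s]) (simp add: \<phi>_def abs_div)
    also have "\<dots> = \<bar>\<phi> s\<bar> / norm u"
      using u by (simp add: power2_norm_eq_inner[symmetric] power2_eq_square)
    finally show ?thesis
      using u by (simp add: field_simps)
  qed
  have "\<phi> constant_on {0..l}"
  proof (rule continuous_discrete_range_constant)
    show "continuous_on {0..l} \<phi>" unfolding \<phi>_def by (intro continuous_intros tangent_continuous)
    show "\<exists>e>0. \<forall>y. y \<in> {0..l} \<and> \<phi> y \<noteq> \<phi> x \<longrightarrow> e \<le> norm (\<phi> y - \<phi> x)" if x: "x \<in> {0..l}" for x
    proof (intro exI[of _ "norm u"] conjI allI impI)
      fix y assume y: "y \<in> {0..l} \<and> \<phi> y \<noteq> \<phi> x"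
      with abs_\<phi>[OF x] abs_\<phi>[of y] show "norm u \<le> norm (\<phi> y - \<phi> x)"
        by (auto simp: abs_if split: if_splits)
    qed (use u in simp)
  qed simp
  then obtain k where "\<And>s. s \<in> {0..l} \<Longrightarrow> \<phi> s = k" by (auto simp: constant_on_def)
  then have "\<forall>s\<in>{0..l}. t s = (k / (u \<bullet> u)) *\<^sub>R u"
    using par unfolding \<phi>_def by simp
  then show ?thesis ..
qed

lemma chords_span_if_not_straight:
  assumes "\<not> (\<exists>c. \<forall>s\<in>{0..l}. t s = c)"
  shows "\<exists>b1\<in>{0..l}. \<exists>b2\<in>{0..l}. \<forall>P.
           cross3 P (Phi b1 - Phi 0) = 0 \<longrightarrow> cross3 P (Phi b2 - Phi 0) = 0 \<longrightarrow> P = 0"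
proof -
  obtain b1 where b1: "b1 \<in> {0..l}" "Phi b1 - Phi 0 \<noteq> 0"
    using exists_nonzero_chord by auto
  have "\<exists>b2\<in>{0..l}. cross3 (Phi b2 - Phi 0) (Phi b1 - Phi 0) \<noteq> 0"
    using tangent_const_if_chords_parallel[OF b1(2)] assms by blast
  then obtain b2 where b2: "b2 \<in> {0..l}" "cross3 (Phi b2 - Phi 0) (Phi b1 - Phi 0) \<noteq> 0" ..
  have "P = 0" if "cross3 P (Phi b1 - Phi 0) = 0" "cross3 P (Phi b2 - Phi 0) = 0" for P
    using cross3_eq_0_if_both_parallel[OF _ that(2,1)] b2(2) by blast
  with b1 b2 show ?thesis by blast
qed

lemma norm_cross3_tangent_le_transverse_norm:
  assumes s: "s \<in> {0..l}"
  shows "norm (cross3 P (t s)) \<le> transverse_norm l t P"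
proof (cases "\<exists>c. \<forall>s\<in>{0..l}. t s = c")
  case True
  then have "t s = t 0" using s l_pos by fastforce
  then show ?thesis using True by (simp add: transverse_norm_def)
next
  case False
  then have "transverse_norm l t P = norm P"
    unfolding transverse_norm_def by (simp only: if_False)
  then show ?thesis
    using norm_cross3_le[of P "t s"] tangent_unit[OF s] by simp
qed

lemma abs_inner_cross3_tangent_le:
  assumes "s \<in> {0..l}" "norm e = 1"
  shows "\<bar>P \<bullet> cross3 (t s) e\<bar> \<le> transverse_norm l t P"
proof -
  have "\<bar>P \<bullet> cross3 (t s) e\<bar> = \<bar>cross3 P (t s) \<bullet> e\<bar>" by (metis cross_triple inner_commute)
  also have "\<dots> \<le> norm (cross3 P (t s))"
    using Cauchy_Schwarz_ineq2[of "cross3 P (t s)" e] assms(2) by simp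
  also have "\<dots> \<le> transverse_norm l t P"
    by (rule norm_cross3_tangent_le_transverse_norm[OF assms(1)])
  finally show ?thesis .
qed

lemma transverse_norm_le_chords:
  "\<exists>b1\<in>{0..l}. \<exists>b2\<in>{0..l}. \<exists>K>0. \<forall>P.
     transverse_norm l t P \<le> K * (norm (cross3 P (Phi b1 - Phi 0)) + norm (cross3 P (Phi b2 - Phi 0)))"
proof (cases "\<exists>c. \<forall>s\<in>{0..l}. t s = c")
  case True
  then obtain c where c: "\<And>s. s \<in> {0..l} \<Longrightarrow> t s = c" by blast
  have l0: "0 \<in> {0..l}" "l \<in> {0..l}" using l_pos by auto
  have "transverse_norm l t P \<le> 1 / l * (norm (cross3 P (Phi l - Phi 0)) + norm (cross3 P (Phi l - Phi 0)))"
    for P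
  proof -
    have "norm (cross3 P (Phi l - Phi 0)) = l * norm (cross3 P c)"
      using chord_if_tangent_const[OF c l0] l_pos by (simp add: cross_mult_right)
    moreover have "transverse_norm l t P = norm (cross3 P c)"
      using True c[OF l0(1)] by (simp add: transverse_norm_def)
    ultimately show ?thesis using l_pos by (simp add: field_simps)
  qed
  then show ?thesis
    using l0 l_pos by (intro bexI[of _ l] exI[of _ "1 / l"]) auto
next
  case False
  then obtain b1 b2 where b12: "b1 \<in> {0..l}" "b2 \<in> {0..l}"
    and kernel: "\<And>P. cross3 P (Phi b1 - Phi 0) = 0 \<Longrightarrow> cross3 P (Phi b2 - Phi 0) = 0 \<Longrightarrow> P = 0"
    using chords_span_if_not_straight by blast
  have "transverse_norm l t P = norm P" for P
    using False unfolding transverse_norm_def by (simp only: if_False)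
  moreover obtain K where "K > 0"
    "\<And>P. norm P \<le> K * (norm (cross3 P (Phi b1 - Phi 0)) + norm (cross3 P (Phi b2 - Phi 0)))"
    using norm_le_cross3_if_trivial_kernel[OF kernel] by blast
  ultimately show ?thesis
    using b12 by (intro bexI[of _ b1] bexI[of _ b2] exI[of _ K]) auto
qed

lemma twisted_end_value_control:
  "\<exists>K>0. \<forall>P Qp. \<exists>b\<in>{0..l}.
     transverse_norm l t P \<le> K * norm (Qp - cross3 P (Phi l - Phi b)) \<and>
     norm Qp \<le> K * norm (Qp - cross3 P (Phi l - Phi b)) \<and>
     norm (Qp - cross3 P (Phi l - Phi 0)) \<le> K * norm (Qp - cross3 P (Phi l - Phi b))"
proof -
  obtain b1 b2 K where b12: "b1 \<in> {0..l}" "b2 \<in> {0..l}" and K: "K > 0"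
    and chords: "\<And>P. transverse_norm l t P
      \<le> K * (norm (cross3 P (Phi b1 - Phi 0)) + norm (cross3 P (Phi b2 - Phi 0)))"
    using transverse_norm_le_chords by blast
  have "\<exists>b\<in>{0..l}. transverse_norm l t P \<le> (4 * K + 1) * norm (Qp - cross3 P (Phi l - Phi b)) \<and>
     norm Qp \<le> (4 * K + 1) * norm (Qp - cross3 P (Phi l - Phi b)) \<and>
     norm (Qp - cross3 P (Phi l - Phi 0)) \<le> (4 * K + 1) * norm (Qp - cross3 P (Phi l - Phi b))" for P Qp
  proof -
    define g where "g x = Qp - cross3 P (Phi l - Phi x)" for x
    define F where "F = {0, l, b1, b2}"
    have F: "finite F" "F \<subseteq> {0..l}" using b12 l_pos by (auto simp: F_def)
    obtain b where b: "b \<in> F" and max: "\<And>x. x \<in> F \<Longrightarrow> norm (g x) \<le> norm (g b)"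
      using finite_obtains_max[OF F(1), of "\<lambda>x. norm (g x)"] by (auto simp: F_def)
    have "cross3 P (Phi x - Phi 0) = g x - g 0" for x
      by (simp add: g_def Cross3.right_diff_distrib)
    then have "norm (cross3 P (Phi x - Phi 0)) \<le> 2 * norm (g b)" if "x \<in> F" for x
      using norm_triangle_ineq4[of "g x" "g 0"] max[OF that] max[of 0] by (simp add: F_def)
    from this[of b1] this[of b2]
    have "norm (cross3 P (Phi b1 - Phi 0)) + norm (cross3 P (Phi b2 - Phi 0)) \<le> 4 * norm (g b)"
      by (simp add: F_def)
    then have "K * (norm (cross3 P (Phi b1 - Phi 0)) + norm (cross3 P (Phi b2 - Phi 0))) \<le> K * (4 * norm (g b))"
      using K by (intro mult_left_mono) auto
    then have "transverse_norm l t P \<le> 4 * K * norm (g b)"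
      using chords[of P] by simp
    moreover have "norm Qp \<le> norm (g b)" "norm (g 0) \<le> norm (g b)"
      using max[of l] max[of 0] by (auto simp: F_def g_def)
    moreover have "0 \<le> 4 * K * norm (g b)" "0 \<le> norm (g b)" using K by simp_all
    moreover have "(4 * K + 1) * norm (g b) = 4 * K * norm (g b) + norm (g b)"
      by (simp add: distrib_right)
    ultimately have "transverse_norm l t P \<le> (4 * K + 1) * norm (g b) \<and>
      norm Qp \<le> (4 * K + 1) * norm (g b) \<and> norm (g 0) \<le> (4 * K + 1) * norm (g b)"
      by linarith
    moreover have "b \<in> {0..l}" using b F(2) by blast
    ultimately show ?thesis unfolding g_def by blast
  qed
  then show ?thesis using K by (intro exI[of _ "4 * K + 1"]) auto
qed

lemma ramp_controlled_exists: "\<exists>C>0. ramp_controlled l Phi t C"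
proof -
  obtain K where K: "K > 0" and control: "\<And>P Qp. \<exists>b\<in>{0..l}.
      transverse_norm l t P \<le> K * norm (Qp - cross3 P (Phi l - Phi b)) \<and>
      norm Qp \<le> K * norm (Qp - cross3 P (Phi l - Phi b)) \<and>
      norm (Qp - cross3 P (Phi l - Phi 0)) \<le> K * norm (Qp - cross3 P (Phi l - Phi b))"
    using twisted_end_value_control by blast
  define C where "C = K^2 * (4 / min (l/2) (1/(4*K)))"
  have "(transverse_norm l t P)^2 \<le> C * N \<and> (norm Qp)^2 \<le> C * N \<and>
     (norm (Qp - cross3 P (Phi l - Phi 0)))^2 \<le> C * N"
    if ramp: "ramp_estimates l (transverse_norm l t P) (\<lambda>b. Qp - cross3 P (Phi l - Phi b)) N" for P Qp N
  proof -
    define g where "g b = Qp - cross3 P (Phi l - Phi b)" for b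
    obtain b where b: "b \<in> {0..l}" "transverse_norm l t P \<le> K * norm (g b)" "norm Qp \<le> K * norm (g b)"
        "norm (g 0) \<le> K * norm (g b)"
      using control[of P Qp] unfolding g_def by blast
    have L0: "0 \<le> transverse_norm l t P" by (simp add: transverse_norm_def)
    have "norm (g x - g y) \<le> \<bar>x - y\<bar> * transverse_norm l t P" if "x \<in> {0..l}" "y \<in> {0..l}" for x y
      using norm_cross3_chord_le[OF norm_cross3_tangent_le_transverse_norm that(2,1)]
      by (simp add: g_def Cross3.right_diff_distrib[symmetric])
    from ramp_estimates_imp_bound[OF l_pos L0 this _ b(1) K b(2)] ramp
    have G: "norm (g b)^2 \<le> 4 * N / min (l/2) (1/(4*K))"
      unfolding g_def by simp
    have "x^2 \<le> C * N" if "0 \<le> x" "x \<le> K * norm (g b)" for x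
    proof -
      have "x^2 \<le> K^2 * norm (g b)^2"
        using power_mono[OF that(2,1)] by (simp add: power_mult_distrib)
      also have "\<dots> \<le> C * N"
        using mult_left_mono[OF G, of "K^2"] by (simp add: C_def)
      finally show ?thesis .
    qed
    with b L0 show ?thesis by (simp add: g_def)
  qed
  moreover have "C > 0" using K l_pos by (simp add: C_def)
  ultimately show ?thesis unfolding ramp_controlled_def by blast
qed

lemma integral_ramp_twist_estimate:
  assumes ab: "0 \<le> a" "a < b" "b \<le> l" and e: "norm e = 1"
  shows "\<bar>integral {0..l} (\<lambda>s. P \<bullet> cross3 (t s) (ramp a b s *\<^sub>R e))
            - (b - a) * (cross3 P (Phi l - Phi b) \<bullet> e)\<bar> \<le> (b - a)^2 * transverse_norm l t P"
proof -
  define \<phi> where "\<phi> s = P \<bullet> cross3 (t s) e" for s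
  define f where "f s = ramp a b s * \<phi> s" for s
  have integrand: "P \<bullet> cross3 (t s) (ramp a b s *\<^sub>R e) = f s" for s
    by (simp add: f_def \<phi>_def cross_mult_right)
  have "continuous_on {0..l} f"
    unfolding f_def \<phi>_def ramp_def by (intro continuous_intros continuous_on_cross tangent_continuous)
  then have int: "f integrable_on {0..l}"
    by (rule integrable_continuous_interval)
  have int_b: "f integrable_on {0..b}"
    by (rule integrable_subinterval_real[OF int]) (use ab in auto)
  have split: "integral {0..l} f = integral {0..a} f + integral {a..b} f + integral {b..l} f"
    using Henstock_Kurzweil_Integration.integral_combine[of 0 b l f, OF _ _ int]
      Henstock_Kurzweil_Integration.integral_combine[of 0 a b f, OF _ _ int_b] ab
    by simp
  have "integral {0..a} f = integral {0..a} (\<lambda>s. 0)"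
    by (intro integral_cong) (use ab in \<open>auto simp: f_def ramp_def\<close>)
  then have before: "integral {0..a} f = 0" by simp
  have "integral {b..l} f = integral {b..l} (\<lambda>s. (b - a) * \<phi> s)"
    by (intro integral_cong) (use ab in \<open>auto simp: f_def ramp_def\<close>)
  also have "\<dots> = (b - a) * (cross3 P (Phi l - Phi b) \<bullet> e)"
    using integral_inner_cross3_tangent[of b l P e] ab by (simp add: \<phi>_def)
  finally have after: "integral {b..l} f = (b - a) * (cross3 P (Phi l - Phi b) \<bullet> e)" .
  have "norm (f s) \<le> (b - a) * transverse_norm l t P" if s: "s \<in> cbox a b" for s
  proof -
    have "\<bar>ramp a b s\<bar> \<le> b - a" using s ab by (auto simp: ramp_def min_def)
    moreover have "\<bar>\<phi> s\<bar> \<le> transverse_norm l t P"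
      unfolding \<phi>_def by (rule abs_inner_cross3_tangent_le) (use s ab e in auto)
    ultimately show ?thesis
      by (simp add: f_def abs_mult mult_mono transverse_norm_def)
  qed
  then have "norm (integral {a..b} f) \<le> (b - a) * transverse_norm l t P * Henstock_Kurzweil_Integration.content (cbox a b)"
    using integrable_subinterval_real[OF int, of a b] ab
    by (intro has_integral_bound[of _ f]) (auto simp: cbox_interval transverse_norm_def)
  then have during: "\<bar>integral {a..b} f\<bar> \<le> (b - a)^2 * transverse_norm l t P"
    using ab by (simp add: power2_eq_square mult_ac)
  show ?thesis
    unfolding integrand split before after using during by simp
qed

end

section \<open>Quantitative injectivity of linear combinations\<close>

definition pointwise_scaleR :: "real \<Rightarrow> ('i \<Rightarrow> 'a::real_vector) \<Rightarrow> 'i \<Rightarrow> 'a" where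
  "pointwise_scaleR r f = (\<lambda>i. r *\<^sub>R f i)"

lemma vector_space_pointwise_scaleR:
  "Vector_Spaces.vector_space (pointwise_scaleR :: real \<Rightarrow> ('i \<Rightarrow> 'a::real_vector) \<Rightarrow> _)"
  by unfold_locales (auto simp: pointwise_scaleR_def fun_eq_iff scaleR_add_right scaleR_add_left)

lemma vector_space_pair_pointwise_scaleR:
  "vector_space_pair (pointwise_scaleR :: real \<Rightarrow> ('i \<Rightarrow> 'a::real_vector) \<Rightarrow> _)
     (pointwise_scaleR :: real \<Rightarrow> ('j \<Rightarrow> 'b::real_vector) \<Rightarrow> _)"
  by (simp add: vector_space_pair_def vector_space_pointwise_scaleR)

lemma sum_fun_apply: "(sum f A) x = (\<Sum>a\<in>A. f a x)" for f :: "'a \<Rightarrow> 'b \<Rightarrow> 'c::comm_monoid_add"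
  by (induction A rule: infinite_finite_induct) auto

lemma injective_linear_combination_left_inverse:
  fixes S :: "'i set" and J :: "'j set" and f :: "'i \<Rightarrow> 'j \<Rightarrow> 'a::real_vector"
  assumes inj: "\<And>c. (\<forall>j\<in>J. (\<Sum>i\<in>S. c i *\<^sub>R f i j) = 0) \<Longrightarrow> \<forall>i\<in>S. c i = 0"
  obtains g :: "('j \<Rightarrow> 'a) \<Rightarrow> 'i \<Rightarrow> real"
  where "Vector_Spaces.linear pointwise_scaleR pointwise_scaleR g"
    and "\<And>c i. i \<in> S \<Longrightarrow> g (\<lambda>j. if j \<in> J then \<Sum>i\<in>S. c i *\<^sub>R f i j else 0) i = c i"
proof -
  interpret vector_space_pair "pointwise_scaleR :: real \<Rightarrow> ('i \<Rightarrow> real) \<Rightarrow> _"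
      "pointwise_scaleR :: real \<Rightarrow> ('j \<Rightarrow> 'a) \<Rightarrow> _"
    by (rule vector_space_pair_pointwise_scaleR)
  define L where "L c = (\<lambda>j. if j \<in> J then \<Sum>i\<in>S. c i *\<^sub>R f i j else 0)" for c :: "'i \<Rightarrow> real"
  define V where "V = {c :: 'i \<Rightarrow> real. \<forall>i. i \<notin> S \<longrightarrow> c i = 0}"
  have "Vector_Spaces.linear pointwise_scaleR pointwise_scaleR L"
    unfolding Vector_Spaces.linear_iff
    by (auto simp: vector_space_pointwise_scaleR L_def pointwise_scaleR_def fun_eq_iff scaleR_add_left
        sum.distrib scaleR_sum_right)
  moreover have "vs1.subspace V"
    unfolding vs1.subspace_def V_def by (auto simp: pointwise_scaleR_def)
  moreover have "inj_on L V"
  proof (rule inj_onI)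
    fix x y assume x: "x \<in> V" and y: "y \<in> V" and e: "L x = L y"
    have "\<forall>j\<in>J. (\<Sum>i\<in>S. (x i - y i) *\<^sub>R f i j) = 0"
    proof
      fix j assume "j \<in> J"
      with fun_cong[OF e, of j] show "(\<Sum>i\<in>S. (x i - y i) *\<^sub>R f i j) = 0"
        by (simp add: L_def scaleR_diff_left sum_subtractf)
    qed
    with inj[of "\<lambda>i. x i - y i"] x y show "x = y" by (auto simp: V_def fun_eq_iff)
  qed
  ultimately obtain g where g: "Vector_Spaces.linear pointwise_scaleR pointwise_scaleR g" "\<forall>v\<in>V. g (L v) = v"
    using linear_exists_left_inverse_on by blast
  have "g (L c) i = c i" if "i \<in> S" for c i
  proof -
    define c' where "c' k = (if k \<in> S then c k else 0)" for k
    have "L c = L c'" by (auto simp: L_def c'_def intro!: sum.cong)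
    moreover have "c' \<in> V" by (simp add: V_def c'_def)
    ultimately show ?thesis using g(2) that by (simp add: c'_def)
  qed
  with g(1) show ?thesis using that by (simp add: L_def)
qed

lemma pointwise_basis_expansion:
  fixes v :: "'j \<Rightarrow> 'a::euclidean_space"
  assumes J: "finite J" and v: "\<And>j. j \<notin> J \<Longrightarrow> v j = 0"
  shows "v = (\<Sum>j\<in>J. \<Sum>b\<in>Basis. pointwise_scaleR (v j \<bullet> b) (\<lambda>j'. if j' = j then b else 0))"
proof
  fix j'
  have "(\<Sum>j\<in>J. \<Sum>b\<in>Basis. pointwise_scaleR (v j \<bullet> b) (\<lambda>j'. if j' = j then b else 0)) j'
      = (\<Sum>j\<in>J. \<Sum>b\<in>Basis. (v j \<bullet> b) *\<^sub>R (if j' = j then b else 0))"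
    by (simp add: sum_fun_apply pointwise_scaleR_def)
  also have "\<dots> = (\<Sum>j\<in>J. if j' = j then \<Sum>b\<in>Basis. (v j \<bullet> b) *\<^sub>R b else 0)"
    by (intro sum.cong) auto
  also have "\<dots> = v j'"
    using J v by (simp add: euclidean_representation)
  finally show "v j' = (\<Sum>j\<in>J. \<Sum>b\<in>Basis. pointwise_scaleR (v j \<bullet> b) (\<lambda>j'. if j' = j then b else 0)) j'" ..
qed

text \<open>A linear left inverse of \<open>c \<mapsto> (\<Sum>i\<in>S. c i *\<^sub>R f i j)\<^sub>j\<close>, evaluated on the standard basis,
  yields the constant.\<close>
lemma injective_linear_combination_coeff_bound:
  fixes S :: "'i set" and J :: "'j set" and f :: "'i \<Rightarrow> 'j \<Rightarrow> 'a::euclidean_space"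
  assumes S: "finite S" and J: "finite J"
    and inj: "\<And>c. (\<forall>j\<in>J. (\<Sum>i\<in>S. c i *\<^sub>R f i j) = 0) \<Longrightarrow> \<forall>i\<in>S. c i = 0"
  shows "\<exists>K>0. \<forall>c. \<forall>i\<in>S. \<bar>c i\<bar> \<le> K * (\<Sum>j\<in>J. norm (\<Sum>i\<in>S. c i *\<^sub>R f i j))"
proof -
  obtain g where g_lin: "Vector_Spaces.linear pointwise_scaleR pointwise_scaleR g"
    and g_inv: "\<And>c i. i \<in> S \<Longrightarrow> g (\<lambda>j. if j \<in> J then \<Sum>i\<in>S. c i *\<^sub>R f i j else 0) i = c i"
    using injective_linear_combination_left_inverse[OF inj] by blast
  interpret vector_space_pair "pointwise_scaleR :: real \<Rightarrow> ('j \<Rightarrow> 'a) \<Rightarrow> _"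
      "pointwise_scaleR :: real \<Rightarrow> ('i \<Rightarrow> real) \<Rightarrow> _"
    by (rule vector_space_pair_pointwise_scaleR)
  define E where "E j b = (\<lambda>j'. if j' = j then b else 0)" for j :: 'j and b :: 'a
  define G where "G i = (\<Sum>j\<in>J. \<Sum>b\<in>Basis. \<bar>g (E j b) i\<bar>)" for i
  define K where "K = 1 + (\<Sum>i\<in>S. G i)"
  have "\<bar>c i\<bar> \<le> K * (\<Sum>j\<in>J. norm (\<Sum>i\<in>S. c i *\<^sub>R f i j))" if i: "i \<in> S" for c i
  proof -
    define v where "v j = (if j \<in> J then \<Sum>i\<in>S. c i *\<^sub>R f i j else 0)" for j
    define n where "n = (\<Sum>j\<in>J. norm (v j))"
    have "c i = g v i"
      using g_inv[OF i, of c] by (simp add: v_def[abs_def])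
    also have "g v = (\<Sum>j\<in>J. \<Sum>b\<in>Basis. pointwise_scaleR (v j \<bullet> b) (g (E j b)))"
      by (subst pointwise_basis_expansion[OF J, of v]) (simp_all add: v_def E_def linear_sum[OF g_lin] linear_scale[OF g_lin])
    finally have "c i = (\<Sum>j\<in>J. \<Sum>b\<in>Basis. (v j \<bullet> b) * g (E j b) i)"
      by (simp add: sum_fun_apply pointwise_scaleR_def)
    also have "\<bar>\<dots>\<bar> \<le> (\<Sum>j\<in>J. \<Sum>b\<in>Basis. n * \<bar>g (E j b) i\<bar>)"
    proof (intro order_trans[OF sum_abs] sum_mono order_trans[OF sum_abs])
      fix j and b :: 'a assume "j \<in> J" "b \<in> Basis"
      then have "\<bar>v j \<bullet> b\<bar> \<le> n"
        using J Basis_le_norm[of b "v j"] member_le_sum[of j J "\<lambda>j. norm (v j)"] by (simp add: n_def)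
      then show "\<bar>(v j \<bullet> b) * g (E j b) i\<bar> \<le> n * \<bar>g (E j b) i\<bar>"
        by (simp add: abs_mult mult_right_mono)
    qed
    also have "\<dots> = n * G i"
      by (simp add: G_def sum_distrib_left)
    also have "\<dots> \<le> n * K"
    proof (rule mult_left_mono)
      have "G i \<le> (\<Sum>i\<in>S. G i)"
        using S i by (intro member_le_sum) (auto simp: G_def intro: sum_nonneg)
      then show "G i \<le> K" by (simp add: K_def)
    qed (simp add: n_def sum_nonneg)
    finally show ?thesis by (simp add: n_def v_def mult.commute)
  qed
  moreover have "K > 0" by (simp add: K_def G_def sum_nonneg add_pos_nonneg)
  ultimately show ?thesis by blast
qed

section \<open>The bilinear form a\<close>

lemma matrix_inv_eqI:
  fixes A B :: "'a::semiring_1^'n^'n"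
  assumes "A ** B = mat 1" "B ** A = mat 1"
  shows "matrix_inv A = B"
proof -
  have M: "A ** matrix_inv A = mat 1 \<and> matrix_inv A ** A = mat 1"
    unfolding matrix_inv_def by (rule someI[of _ B]) (simp add: assms)
  have "B = B ** (A ** matrix_inv A)" using M by simp
  also have "\<dots> = matrix_inv A" by (simp add: matrix_mul_assoc assms(2))
  finally show ?thesis by simp
qed

lemma matrix_inv_pos_diag:
  assumes "pos_diag H"
  shows "matrix_inv H = (\<chi> i j. if i = j then 1 / H$i$i else 0)"
proof (rule matrix_inv_eqI)
  define D :: "real^3^3" where "D = (\<chi> i j. if i = j then 1 / H$i$i else 0)"
  have H: "H$i$j = (if i = j then H$i$i else 0)" for i j
    using assms by (auto simp: pos_diag_def)
  have H0: "H$i$i \<noteq> 0" for i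
    using assms by (metis pos_diag_def less_irrefl)
  have "(H ** D)$i$j = (if i = j then 1 else 0)" for i j
  proof -
    have "(H ** D)$i$j = (\<Sum>k\<in>UNIV. H$i$k * D$k$j)" by (simp add: matrix_matrix_mult_def)
    also have "\<dots> = (\<Sum>k\<in>UNIV. if k = i then H$i$i * D$i$j else 0)"
      by (intro sum.cong refl) (subst H, auto)
    finally show ?thesis using H0 by (simp add: D_def)
  qed
  then show "H ** D = mat 1" by (simp add: vec_eq_iff mat_def)
  have "(D ** H)$i$j = (if i = j then 1 else 0)" for i j
  proof -
    have "(D ** H)$i$j = (\<Sum>k\<in>UNIV. D$i$k * H$k$j)" by (simp add: matrix_matrix_mult_def)
    also have "\<dots> = (\<Sum>k\<in>UNIV. if k = i then D$i$i * H$i$j else 0)"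
      by (intro sum.cong refl) (auto simp: D_def)
    finally show ?thesis using H0 H[of i j] by (simp add: D_def)
  qed
  then show "D ** H = mat 1" by (simp add: vec_eq_iff mat_def)
qed

lemma vector_matrix_nth: "(x v* Q) $ a = (\<chi> b. Q$b$a) \<bullet> x"
  by (simp add: vector_matrix_mult_def inner_vec_def mult.commute)

lemma sum_power2_nth_eq_norm: "(\<Sum>a\<in>UNIV. (y$a)^2) = norm y ^ 2" for y :: "real^'n"
  unfolding dot_square_norm[symmetric] inner_vec_def by (simp add: power2_eq_square)

lemma norm_vector_orthogonal_matrix:
  fixes Q :: "real^'n^'n"
  assumes "orthogonal_matrix Q"
  shows "norm (x v* Q) = norm x"
proof -
  have "Q *v (x v* Q) = x"
    using assms unfolding orthogonal_matrix_def
    by (metis transpose_matrix_vector matrix_vector_mul_assoc matrix_vector_mul_lid)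
  then have "(x v* Q) \<bullet> (x v* Q) = x \<bullet> x"
    by (simp add: dot_lmul_matrix)
  then show ?thesis by (simp add: norm_eq_sqrt_inner)
qed

lemma quadratic_form_pos_diag:
  fixes Q H :: "real^3^3"
  assumes "pos_diag H"
  shows "((Q ** matrix_inv H ** transpose Q) *v x) \<bullet> x = (\<Sum>a\<in>UNIV. (x v* Q)$a ^ 2 / H$a$a)"
proof -
  have "((Q ** matrix_inv H ** transpose Q) *v x) \<bullet> x = (matrix_inv H *v (x v* Q)) \<bullet> (x v* Q)"
    by (metis dot_lmul_matrix inner_commute matrix_vector_mul_assoc transpose_matrix_vector)
  also have "\<dots> = (\<Sum>a\<in>UNIV. (x v* Q)$a ^ 2 / H$a$a)"
    by (simp add: matrix_inv_pos_diag[OF assms] matrix_vector_mult_def inner_vec_def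
        if_distrib[of "\<lambda>z. z * _"] power2_eq_square cong: if_cong)
  finally show ?thesis .
qed

lemma quadratic_form_lower_bound:
  fixes Q H :: "real^3^3"
  assumes H: "pos_diag H" and Q: "orthogonal_matrix Q" and lam: "\<And>a. lam * H$a$a \<le> 1"
  shows "lam * norm x ^ 2 \<le> ((Q ** matrix_inv H ** transpose Q) *v x) \<bullet> x"
proof -
  have "lam * norm x ^ 2 = (\<Sum>a\<in>UNIV. lam * (x v* Q)$a ^ 2)"
    by (simp add: sum_distrib_left[symmetric] sum_power2_nth_eq_norm norm_vector_orthogonal_matrix[OF Q])
  also have "\<dots> \<le> (\<Sum>a\<in>UNIV. (x v* Q)$a ^ 2 / H$a$a)"
  proof (rule sum_mono)
    fix a
    have "lam \<le> 1 / H$a$a" using lam[of a] H by (simp add: pos_diag_def field_simps)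
    then show "lam * (x v* Q)$a ^ 2 \<le> (x v* Q)$a ^ 2 / H$a$a"
      using mult_right_mono[of lam "1 / H$a$a" "(x v* Q)$a ^ 2"] by simp
  qed
  finally show ?thesis by (simp add: quadratic_form_pos_diag[OF H])
qed

lemma quadratic_form_upper_bound:
  fixes Q H :: "real^3^3"
  assumes H: "pos_diag H" and Q: "orthogonal_matrix Q"
  shows "((Q ** matrix_inv H ** transpose Q) *v x) \<bullet> x \<le> (\<Sum>a\<in>UNIV. 1 / H$a$a) * norm x ^ 2"
proof -
  have "(\<Sum>a\<in>UNIV. (x v* Q)$a ^ 2 / H$a$a) \<le> (\<Sum>a\<in>UNIV. norm x ^ 2 / H$a$a)"
  proof (rule sum_mono)
    fix a
    have "(x v* Q)$a ^ 2 \<le> norm x ^ 2"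
      using member_le_sum[of a UNIV "\<lambda>a. (x v* Q)$a ^ 2"]
      by (simp add: sum_power2_nth_eq_norm norm_vector_orthogonal_matrix[OF Q])
    then show "(x v* Q)$a ^ 2 / H$a$a \<le> norm x ^ 2 / H$a$a"
      by (rule divide_right_mono) (use H in \<open>simp add: pos_diag_def less_imp_le\<close>)
  qed
  then show ?thesis
    by (simp add: quadratic_form_pos_diag[OF H] sum_distrib_right)
qed

lemma integral_quadratic_form_lower_bound:
  fixes Q :: "real \<Rightarrow> real^3^3" and H :: "real^3^3" and q :: "real \<Rightarrow> real^3"
  assumes Qc: "continuous_on {0..l} Q" and Qo: "\<And>s. s \<in> {0..l} \<Longrightarrow> orthogonal_matrix (Q s)"
    and H: "pos_diag H" and q: "L2_on l q" and lam: "\<And>a. lam * H$a$a \<le> 1"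
  shows "lam * integral {0..l} (\<lambda>s. norm (q s)^2)
    \<le> integral {0..l} (\<lambda>s. ((Q s ** matrix_inv H ** transpose (Q s)) *v q s) \<bullet> q s)"
proof -
  define F where "F s = ((Q s ** matrix_inv H ** transpose (Q s)) *v q s) \<bullet> q s" for s
  have "(\<lambda>s. (q s v* Q s)$a) measurable_on {0..l}" for a
    unfolding vector_matrix_nth
    by (intro measurable_on_inner continuous_on_imp_measurable_on_interval L2_on_measurable[OF q]
        continuous_intros Qc)
  then have "(\<lambda>s. \<Sum>a\<in>UNIV. (q s v* Q s)$a ^ 2 / H$a$a) measurable_on {0..l}"
    by (intro measurable_on_sum measurable_on_cdivide measurable_on_power2) auto
  moreover have "F = (\<lambda>s. \<Sum>a\<in>UNIV. (q s v* Q s)$a ^ 2 / H$a$a)"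
    unfolding F_def by (rule ext) (rule quadratic_form_pos_diag[OF H])
  ultimately have "F measurable_on {0..l}" by simp
  moreover have "(\<lambda>s. (\<Sum>a\<in>UNIV. 1 / H$a$a) * norm (q s)^2) integrable_on {0..l}"
    by (intro integrable_on_mult_right L2_on_norm_sq_integrable[OF q])
  moreover have "norm (F s) \<le> (\<Sum>a\<in>UNIV. 1 / H$a$a) * norm (q s)^2" if "s \<in> {0..l}" for s
  proof -
    have "0 \<le> F s"
      unfolding F_def quadratic_form_pos_diag[OF H] using H
      by (intro sum_nonneg divide_nonneg_nonneg) (simp_all add: pos_diag_def less_imp_le)
    then show ?thesis
      using quadratic_form_upper_bound[OF H Qo[OF that]] by (simp add: F_def)
  qed
  ultimately have "F integrable_on {0..l}"
    by (rule integrable_on_interval_if_measurable_bounded)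
  then have "integral {0..l} (\<lambda>s. lam * norm (q s)^2) \<le> integral {0..l} F"
    using quadratic_form_lower_bound[OF H Qo lam]
    by (intro integral_le integrable_on_mult_right L2_on_norm_sq_integrable[OF q]) (auto simp: F_def)
  then show ?thesis by (simp add: F_def[abs_def])
qed

section \<open>The kernel of B on a single edge\<close>

definition b_edge_form ::
  "real \<Rightarrow> (real \<Rightarrow> real^3) \<Rightarrow> (real \<Rightarrow> real^3) \<Rightarrow> (real \<Rightarrow> real^3)
   \<Rightarrow> real^3 \<Rightarrow> real^3 \<Rightarrow> real^3 \<Rightarrow> real^3 \<Rightarrow> real^3 \<Rightarrow> real^3
   \<Rightarrow> (real \<Rightarrow> real^3) \<Rightarrow> (real \<Rightarrow> real^3) \<Rightarrow> (real \<Rightarrow> real^3) \<Rightarrow> (real \<Rightarrow> real^3) \<Rightarrow> real" where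
  "b_edge_form l t q p Pp Pm Qp Qm \<alpha> \<beta> v dv w dw =
     integral {0..l} (\<lambda>s. - (p s \<bullet> (dv s + cross3 (t s) (w s))) - q s \<bullet> dw s)
     + (Pp \<bullet> v l - Pm \<bullet> v 0) + (Qp \<bullet> w l - Qm \<bullet> w 0)
     + \<alpha> \<bullet> integral {0..l} v + \<beta> \<bullet> integral {0..l} w"

lemma sum_eq_single_term:
  "finite A \<Longrightarrow> k \<in> A \<Longrightarrow> (\<And>i. i \<in> A \<Longrightarrow> i \<noteq> k \<Longrightarrow> g i = 0) \<Longrightarrow> sum g A = g k"
  by (subst sum.mono_neutral_left[of A "{k}", symmetric]) auto

lemma b_form_single_edge:
  assumes k: "k < nE"
  shows "b_form nV nE src tgt ell Phi q p Pp Pm Qp Qm \<alpha> \<beta>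
      (\<lambda>i. if i = k then v else (\<lambda>s. 0)) (\<lambda>i. if i = k then dv else (\<lambda>s. 0))
      (\<lambda>i. if i = k then w else (\<lambda>s. 0)) (\<lambda>i. if i = k then dw else (\<lambda>s. 0)) (\<lambda>j. 0) (\<lambda>j. 0)
   = b_edge_form (ell k) (tangent (Phi k) (ell k)) (q k) (p k) (Pp k) (Pm k) (Qp k) (Qm k) \<alpha> \<beta> v dv w dw"
proof -
  have single: "(\<Sum>i<nE. g i) = g k" if "\<And>i. i \<noteq> k \<Longrightarrow> g i = 0" for g :: "nat \<Rightarrow> 'a::comm_monoid_add"
    using k that by (intro sum_eq_single_term) auto
  show ?thesis
    unfolding b_form_def b_edge_form_def by (subst (1 2 3 4 5) single) auto
qed

lemma b_form_vertex_forces: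
  assumes j: "j < nV"
  shows "b_form nV nE src tgt ell Phi q p Pp Pm Qp Qm \<alpha> \<beta>
      (\<lambda>i s. 0) (\<lambda>i s. 0) (\<lambda>i s. 0) (\<lambda>i s. 0) (\<lambda>j'. if j' = j then e else 0) (\<lambda>j. 0)
   = - ((Aplus nE tgt Pp j - Aminus nE src Pm j) \<bullet> e)"
  unfolding b_form_def using j by (subst sum_eq_single_term[of _ j]) auto

lemma b_form_vertex_moments:
  assumes j: "j < nV"
  shows "b_form nV nE src tgt ell Phi q p Pp Pm Qp Qm \<alpha> \<beta>
      (\<lambda>i s. 0) (\<lambda>i s. 0) (\<lambda>i s. 0) (\<lambda>i s. 0) (\<lambda>j. 0) (\<lambda>j'. if j' = j then e else 0)
   = - ((Aplus nE tgt Qp j - Aminus nE src Qm j) \<bullet> e)"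
  unfolding b_form_def using j by (subst sum_eq_single_term[of _ j]) auto

locale edge_kernel = regular_curve +
  fixes q p :: "real \<Rightarrow> real^3" and Pp Pm Qp Qm \<alpha> \<beta> :: "real^3"
  assumes q_L2: "L2_on l q" and p_L2: "L2_on l p"
    and b_edge_form_eq_0:
      "\<And>v dv w dw. H1_on l v dv \<Longrightarrow> H1_on l w dw \<Longrightarrow> b_edge_form l t q p Pp Pm Qp Qm \<alpha> \<beta> v dv w dw = 0"
begin

lemma force_balance: "Pp - Pm + l *\<^sub>R \<alpha> = 0"
proof -
  have "(Pp - Pm + l *\<^sub>R \<alpha>) \<bullet> e = 0" for e
    using b_edge_form_eq_0[OF H1_on_const H1_on_const, of e 0] l_pos
    by (simp add: b_edge_form_def inner_diff_left inner_add_left)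
  then show ?thesis by (metis inner_eq_zero_iff)
qed

context
  assumes \<alpha>: "\<alpha> = 0" and Pm: "Pm = Pp"
begin

lemma integral_force_inner_const: "integral {0..l} (\<lambda>s. p s \<bullet> e) = l * (Pp \<bullet> e)"
  using b_edge_form_eq_0[OF H1_on_linear H1_on_const, of e 0] by (simp add: b_edge_form_def \<alpha> Pm)

lemma norm_sq_integral_force_diff_eq_0: "integral {0..l} (\<lambda>s. norm (p s - Pp)^2) = 0"
proof -
  define d where "d s = p s - Pp" for s
  have d: "L2_on l d" unfolding d_def by (rule L2_on_diff[OF p_L2 L2_on_const])
  have "integral {0..l} (\<lambda>s. Pp \<bullet> d s) = integral {0..l} (\<lambda>s. p s \<bullet> Pp) - integral {0..l} (\<lambda>s. Pp \<bullet> Pp)"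
    unfolding d_def inner_diff_right
    by (subst integral_diff) (auto simp: inner_commute L2_on_inner_integrable[OF L2_on_const p_L2])
  then have Pp_d: "integral {0..l} (\<lambda>s. Pp \<bullet> d s) = 0"
    using l_pos by (simp add: integral_force_inner_const)
  have "b_edge_form l t q p Pp Pm Qp Qm \<alpha> \<beta> (\<lambda>s. integral {0..s} d) d (\<lambda>s. 0) (\<lambda>s. 0) = 0"
    by (rule b_edge_form_eq_0[OF H1_on_primitive[OF d] H1_on_const])
  then have "integral {0..l} (\<lambda>s. p s \<bullet> d s) = Pp \<bullet> integral {0..l} d"
    by (simp add: b_edge_form_def \<alpha> Pm)
  also have "\<dots> = 0"
    using Pp_d inner_integral_left[OF L2_on_integrable[OF d]] by simp
  finally have p_d: "integral {0..l} (\<lambda>s. p s \<bullet> d s) = 0" .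
  have "integral {0..l} (\<lambda>s. norm (d s)^2) = integral {0..l} (\<lambda>s. p s \<bullet> d s - Pp \<bullet> d s)"
    by (simp add: d_def power2_norm_eq_inner inner_diff_left)
  also have "\<dots> = 0"
    using p_d Pp_d
    by (subst integral_diff) (auto simp: L2_on_inner_integrable[OF p_L2 d] L2_on_inner_integrable[OF L2_on_const d])
  finally show ?thesis by (simp add: d_def)
qed

lemma integral_force_inner:
  assumes h: "L2_on l h"
  shows "integral {0..l} (\<lambda>s. p s \<bullet> h s) = integral {0..l} (\<lambda>s. Pp \<bullet> h s)"
proof -
  have d: "L2_on l (\<lambda>s. p s - Pp)" by (rule L2_on_diff[OF p_L2 L2_on_const])
  have "integral {0..l} (\<lambda>s. p s \<bullet> h s) - integral {0..l} (\<lambda>s. Pp \<bullet> h s)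
      = integral {0..l} (\<lambda>s. (p s - Pp) \<bullet> h s)"
    unfolding inner_diff_left
    by (rule integral_diff[symmetric, OF L2_on_inner_integrable[OF p_L2 h] L2_on_inner_integrable[OF L2_on_const h]])
  also have "\<dots> = 0"
    by (rule integral_inner_eq_0_if_norm_sq_integral_eq_0[OF d h norm_sq_integral_force_diff_eq_0])
  finally show ?thesis by simp
qed

lemma integral_norm_sq_force: "integral {0..l} (\<lambda>s. norm (p s)^2) = l * norm Pp ^ 2"
proof -
  have "integral {0..l} (\<lambda>s. norm (p s)^2) = integral {0..l} (\<lambda>s. Pp \<bullet> p s)"
    using integral_force_inner[OF p_L2] by (simp add: power2_norm_eq_inner)
  also have "\<dots> = l * norm Pp ^ 2"
    using integral_force_inner_const[of Pp] by (simp add: inner_commute power2_norm_eq_inner)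
  finally show ?thesis .
qed

lemma moment_balance: "Qp - Qm = cross3 Pp (Phi l - Phi 0) - l *\<^sub>R \<beta>"
proof -
  have "(Qp - Qm - cross3 Pp (Phi l - Phi 0) + l *\<^sub>R \<beta>) \<bullet> e = 0" for e
  proof -
    have "integral {0..l} (\<lambda>s. p s \<bullet> cross3 (t s) e) = integral {0..l} (\<lambda>s. Pp \<bullet> cross3 (t s) e)"
      by (rule integral_force_inner[OF L2_on_continuous])
        (intro continuous_on_cross tangent_continuous continuous_on_const)
    also have "\<dots> = cross3 Pp (Phi l - Phi 0) \<bullet> e"
      using integral_inner_cross3_tangent[of 0 l Pp e] l_pos by simp
    finally show ?thesis
      using b_edge_form_eq_0[OF H1_on_const H1_on_const, of 0 e] l_pos
      by (simp add: b_edge_form_def inner_diff_left inner_add_left)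
  qed
  then have "Qp - Qm - cross3 Pp (Phi l - Phi 0) + l *\<^sub>R \<beta> = 0"
    by (metis inner_eq_zero_iff)
  then show ?thesis by (simp add: algebra_simps)
qed

lemma integral_moment_ramp:
  assumes \<beta>: "\<beta> = 0" and ab: "0 \<le> a" "a \<le> b" "b \<le> l"
  shows "integral {a..b} (\<lambda>s. q s \<bullet> e)
    = (b - a) * (Qp \<bullet> e) - integral {0..l} (\<lambda>s. Pp \<bullet> cross3 (t s) (ramp a b s *\<^sub>R e))"
proof -
  define w where "w s = ramp a b s *\<^sub>R e" for s
  define dw where "dw s = (if s \<in> {a..b} then e else 0)" for s
  have w: "H1_on l w dw"
    unfolding w_def dw_def by (rule H1_on_ramp[OF ab(1,2)])
  have "L2_on l (\<lambda>s. cross3 (t s) (w s))"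
    unfolding w_def ramp_def by (intro L2_on_continuous continuous_on_cross tangent_continuous continuous_intros)
  then have p_w: "integral {0..l} (\<lambda>s. p s \<bullet> cross3 (t s) (w s)) = integral {0..l} (\<lambda>s. Pp \<bullet> cross3 (t s) (w s))"
    by (rule integral_force_inner)
  have "integral {0..l} (\<lambda>s. q s \<bullet> dw s) = integral {0..l} (\<lambda>s. if s \<in> {a..b} then q s \<bullet> e else 0)"
    by (intro integral_cong) (simp add: dw_def)
  also have "\<dots> = integral ({a..b} \<inter> {0..l}) (\<lambda>s. q s \<bullet> e)"
    by (rule integral_restrict_Int)
  also have "{a..b} \<inter> {0..l} = {a..b}"
    using ab by auto
  finally have q_dw: "integral {0..l} (\<lambda>s. q s \<bullet> dw s) = integral {a..b} (\<lambda>s. q s \<bullet> e)" .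
  have "b_edge_form l t q p Pp Pm Qp Qm \<alpha> \<beta> (\<lambda>s. 0) (\<lambda>s. 0) w dw = 0"
    by (rule b_edge_form_eq_0[OF H1_on_const w])
  then have "integral {0..l} (\<lambda>s. - (p s \<bullet> cross3 (t s) (w s)) - q s \<bullet> dw s) + (b - a) * (Qp \<bullet> e) = 0"
    using ab by (simp add: b_edge_form_def \<beta> w_def ramp_def)
  moreover have "integral {0..l} (\<lambda>s. - (p s \<bullet> cross3 (t s) (w s)) - q s \<bullet> dw s)
      = - integral {0..l} (\<lambda>s. p s \<bullet> cross3 (t s) (w s)) - integral {0..l} (\<lambda>s. q s \<bullet> dw s)"
    using L2_on_inner_integrable[OF p_L2 \<open>L2_on l (\<lambda>s. cross3 (t s) (w s))\<close>]
      L2_on_inner_integrable[OF q_L2 H1_on_def[THEN iffD1, OF w, THEN conjunct1]]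
    by (simp add: integral_diff integrable_neg)
  ultimately show ?thesis
    using p_w q_dw by (simp add: w_def)
qed

lemma ramp_estimates_moment:
  assumes \<beta>: "\<beta> = 0"
  shows "ramp_estimates l (transverse_norm l t Pp) (\<lambda>b. Qp - cross3 Pp (Phi l - Phi b))
           (integral {0..l} (\<lambda>s. norm (q s)^2))"
  unfolding ramp_estimates_def
proof (intro allI impI)
  fix a b assume ab: "0 \<le> a" "a < b" "b \<le> l"
  define G where "G = Qp - cross3 Pp (Phi l - Phi b)"
  define L where "L = transverse_norm l t Pp"
  define N where "N = integral {0..l} (\<lambda>s. norm (q s)^2)"
  assume cond: "(b - a) * L \<le> norm G"
  have N: "0 \<le> N" unfolding N_def by (rule L2_on_norm_sq_integral_nonneg[OF q_L2])
  have L: "0 \<le> L" by (simp add: L_def transverse_norm_def)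
  show "(b - a) * (norm G - (b - a) * L)^2 \<le> N"
  proof (cases "G = 0")
    case True
    then show ?thesis using cond ab L N by (simp add: mult_le_0_iff)
  next
    case False
    define e where "e = (1 / norm G) *\<^sub>R G"
    have e: "norm e = 1" "G \<bullet> e = norm G"
      using False by (simp_all add: e_def dot_square_norm power2_eq_square)
    define I where "I = integral {a..b} (\<lambda>s. q s \<bullet> e)"
    have "\<bar>I - (b - a) * (G \<bullet> e)\<bar> \<le> (b - a)^2 * L"
      using integral_moment_ramp[OF \<beta> ab(1) less_imp_le[OF ab(2)] ab(3), of e]
        integral_ramp_twist_estimate[OF ab e(1), of Pp]
      by (simp add: I_def G_def L_def inner_diff_left algebra_simps)
    then have "(b - a) * (norm G - (b - a) * L) \<le> I"
      using e(2) by (simp add: power2_eq_square algebra_simps)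
    moreover have "0 \<le> (b - a) * (norm G - (b - a) * L)"
      using cond ab by simp
    ultimately have "((b - a) * (norm G - (b - a) * L))^2 \<le> I^2"
      by (intro power_mono) auto
    also have "I^2 \<le> (b - a) * N"
      unfolding I_def N_def by (rule integral_inner_unit_squared_le[OF q_L2 e(1) ab])
    finally have "(b - a) * ((b - a) * (norm G - (b - a) * L)^2) \<le> (b - a) * N"
      by (simp add: power_mult_distrib power2_eq_square algebra_simps)
    then show ?thesis using ab by simp
  qed
qed

end

end

section \<open>The stent network\<close>

lemma regular_curve_if_smooth:
  assumes l: "0 < l" and smooth: "smooth_on_interval l f"
    and unit: "\<And>s. s \<in> {0..l} \<Longrightarrow> norm (tangent f l s) = 1"
  shows "regular_curve l f (tangent f l)"
proof -
  obtain D where D0: "D 0 = f"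
    and D: "\<And>k s. s \<in> {0..l} \<Longrightarrow> (D k has_vector_derivative D (Suc k) s) (at s within {0..l})"
    using smooth unfolding smooth_on_interval_def by blast
  have tangent: "tangent f l s = D 1 s" if "s \<in> {0..l}" for s
    using vector_derivative_within_cbox[of 0 l s f "D 1 s"] l that D[of s 0] D0
    by (simp add: tangent_def cbox_interval)
  have "continuous_on {0..l} (D 1)"
    by (rule continuous_on_vector_derivative[of _ _ "D 2"]) (use D[of _ 1] in \<open>auto simp: numeral_2_eq_2\<close>)
  then have "continuous_on {0..l} (tangent f l)"
    by (rule continuous_on_eq) (simp add: tangent)
  moreover have "(f has_vector_derivative tangent f l s) (at s within {0..l})" if "s \<in> {0..l}" for s
    using D[OF that, of 0] D0 tangent[OF that] by simp
  ultimately show ?thesis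
    using l unit by unfold_locales
qed

lemma sum_fiberwise_lessThan:
  fixes h :: "nat \<Rightarrow> nat \<Rightarrow> 'a::comm_monoid_add"
  assumes "\<And>i. i < nE \<Longrightarrow> r i < nV"
  shows "(\<Sum>j<nV. \<Sum>i | i < nE \<and> r i = j. h i j) = (\<Sum>i<nE. h i (r i))"
proof -
  have "(\<Sum>i | i < nE \<and> r i = j. h i j) = (\<Sum>i<nE. if r i = j then h i j else 0)" for j
  proof -
    have "{i. i < nE \<and> r i = j} = {i \<in> {..<nE}. r i = j}" by auto
    then show ?thesis
      using sum.inter_filter[OF finite_lessThan[of nE], of "\<lambda>i. h i j" "\<lambda>i. r i = j"] by simp
  qed
  then have "(\<Sum>j<nV. \<Sum>i | i < nE \<and> r i = j. h i j) = (\<Sum>j<nV. \<Sum>i<nE. if r i = j then h i j else 0)"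
    by simp
  also have "\<dots> = (\<Sum>i<nE. \<Sum>j<nV. if r i = j then h i j else 0)"
    by (rule sum.swap)
  also have "\<dots> = (\<Sum>i<nE. h i (r i))"
    using assms by (intro sum.cong refl) simp
  finally show ?thesis .
qed

lemma Aminus_eq_Aplus: "Aminus nE r X j = Aplus nE r X j"
  by (simp add: Aplus_def Aminus_def)

lemma Aplus_add: "Aplus nE r (\<lambda>i. X i + Y i) j = Aplus nE r X j + Aplus nE r Y j"
  by (simp add: Aplus_def sum.distrib)

lemma norm_Aplus_le: "norm (Aplus nE r X j) \<le> (\<Sum>i<nE. norm (X i))"
  unfolding Aplus_def by (rule order_trans[OF norm_sum sum_mono2]) auto

lemma norm_incidence_le:
  "norm (Aplus nE tgt X j - Aminus nE src X j) \<le> 2 * (\<Sum>i<nE. norm (X i))"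
  using norm_triangle_ineq4[of "Aplus nE tgt X j" "Aminus nE src X j"]
    norm_Aplus_le[of nE tgt X j] norm_Aplus_le[of nE src X j]
  by (simp add: Aminus_eq_Aplus)

lemma sum_Aplus:
  assumes "\<And>i. i < nE \<Longrightarrow> r i < nV"
  shows "(\<Sum>j<nV. Aplus nE r X j) = (\<Sum>i<nE. X i)"
  unfolding Aplus_def using sum_fiberwise_lessThan[of nE r nV "\<lambda>i j. X i"] assms by simp

lemma sum_cross3_Aplus:
  assumes "\<And>i. i < nE \<Longrightarrow> r i < nV"
  shows "(\<Sum>j<nV. cross3 (Aplus nE r X j) (V j)) = (\<Sum>i<nE. cross3 (X i) (V (r i)))"
proof -
  have "(\<Sum>j<nV. cross3 (Aplus nE r X j) (V j)) = (\<Sum>j<nV. \<Sum>i | i < nE \<and> r i = j. cross3 (X i) (V j))"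
    unfolding Aplus_def
    by (intro sum.cong refl) (simp add: linear_sum[OF bounded_linear.linear[OF bounded_linear_cross3_left]])
  also have "\<dots> = (\<Sum>i<nE. cross3 (X i) (V (r i)))"
    by (rule sum_fiberwise_lessThan) (use assms in auto)
  finally show ?thesis .
qed

locale stent =
  fixes nV nE :: nat and src tgt :: "nat \<Rightarrow> nat" and Vpos :: "nat \<Rightarrow> real^3"
    and ell :: "nat \<Rightarrow> real" and Phi :: "nat \<Rightarrow> real \<Rightarrow> real^3"
    and Q :: "nat \<Rightarrow> real \<Rightarrow> real^3^3" and H :: "nat \<Rightarrow> real^3^3"
  assumes geom: "stent_geometry nV nE src tgt Vpos ell Phi Q H"
begin

abbreviation T :: "nat \<Rightarrow> real \<Rightarrow> real^3" where
  "T i \<equiv> tangent (Phi i) (ell i)"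

lemma edges_exist: "0 < nE"
  and src_lt: "i < nE \<Longrightarrow> src i < nV" and tgt_lt: "i < nE \<Longrightarrow> tgt i < nV"
  and ell_pos: "i < nE \<Longrightarrow> 0 < ell i"
  and Phi_start: "i < nE \<Longrightarrow> Phi i 0 = Vpos (src i)"
  and Phi_end: "i < nE \<Longrightarrow> Phi i (ell i) = Vpos (tgt i)"
  and Q_continuous: "i < nE \<Longrightarrow> continuous_on {0..ell i} (Q i)"
  and Q_orthogonal: "i < nE \<Longrightarrow> s \<in> {0..ell i} \<Longrightarrow> orthogonal_matrix (Q i s)"
  and H_pos_diag: "i < nE \<Longrightarrow> pos_diag (H i)"
  using geom by (auto simp: stent_geometry_def)

lemma edge_regular: "i < nE \<Longrightarrow> regular_curve (ell i) (Phi i) (T i)"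
  using geom by (intro regular_curve_if_smooth) (auto simp: stent_geometry_def)

lemma a_form_coercive:
  "\<exists>lam>0. \<forall>q. (\<forall>i<nE. L2_on (ell i) (q i)) \<longrightarrow>
     lam * (\<Sum>i<nE. integral {0..ell i} (\<lambda>s. norm (q i s)^2)) \<le> a_form nE ell Q H q q"
proof -
  define lam where "lam = 1 / (1 + (\<Sum>i<nE. \<Sum>a\<in>UNIV. H i $ a $ a))"
  have H: "0 < H i $ a $ a" if "i < nE" for i a
    using H_pos_diag[OF that] by (simp add: pos_diag_def)
  then have Hsum: "0 \<le> (\<Sum>i<nE. \<Sum>a\<in>UNIV. H i $ a $ a)"
    by (intro sum_nonneg) (auto intro: less_imp_le)
  have lamH: "lam * H i $ a $ a \<le> 1" if "i < nE" for i a
  proof -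
    have "H i $ a $ a \<le> (\<Sum>a\<in>UNIV. H i $ a $ a)"
      using H[OF that] by (intro member_le_sum) (auto intro: less_imp_le)
    also have "\<dots> \<le> (\<Sum>i<nE. \<Sum>a\<in>UNIV. H i $ a $ a)"
      using that H by (intro member_le_sum[of i "{..<nE}" "\<lambda>i. \<Sum>a\<in>UNIV. H i $ a $ a"] sum_nonneg)
        (auto intro: less_imp_le)
    finally show ?thesis using Hsum by (simp add: lam_def field_simps)
  qed
  have "lam * (\<Sum>i<nE. integral {0..ell i} (\<lambda>s. norm (q i s)^2)) \<le> a_form nE ell Q H q q"
    if q: "\<forall>i<nE. L2_on (ell i) (q i)" for q
    unfolding a_form_def sum_distrib_left
  proof (rule sum_mono)
    fix i assume "i \<in> {..<nE}"
    then have i: "i < nE" by simp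
    show "lam * integral {0..ell i} (\<lambda>s. norm (q i s)^2)
      \<le> integral {0..ell i} (\<lambda>s. ((Q i s ** matrix_inv (H i) ** transpose (Q i s)) *v q i s) \<bullet> q i s)"
      by (rule integral_quadratic_form_lower_bound[OF Q_continuous[OF i] Q_orthogonal[OF i]
            H_pos_diag[OF i] q[rule_format, OF i] lamH[OF i]])
  qed
  moreover have "0 < lam" using Hsum by (simp add: lam_def)
  ultimately show ?thesis by blast
qed

lemma norm_tangent_start: "i < nE \<Longrightarrow> norm (T i 0) = 1"
  using regular_curve.tangent_unit[OF edge_regular] ell_pos by fastforce

lemma norm_transverse_part:
  assumes i: "i < nE"
  shows "norm (P - (if straight_edge ell Phi i then (P \<bullet> T i 0) *\<^sub>R T i 0 else 0))
    = transverse_norm (ell i) (T i) P"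
  using norm_diff_proj_eq_norm_cross3[OF norm_tangent_start[OF i]]
  by (simp add: transverse_norm_def straight_edge_def[symmetric])

lemma incidence_sum_straight:
  fixes c :: "nat \<Rightarrow> real"
  defines "along i \<equiv> if straight_edge ell Phi i then c i *\<^sub>R T i 0 else 0"
  shows "(\<Sum>i | i < nE \<and> straight_edge ell Phi i.
             c i *\<^sub>R ((if tgt i = j then T i 0 else 0) - (if src i = j then T i 0 else 0)))
    = Aplus nE tgt along j - Aminus nE src along j"
    and "Aplus nE tgt along j = (\<Sum>i | i < nE \<and> tgt i = j \<and> straight_edge ell Phi i. c i *\<^sub>R T i 0)"
    and "Aminus nE src along j = (\<Sum>i | i < nE \<and> src i = j \<and> straight_edge ell Phi i. c i *\<^sub>R T i 0)"
proof -
  have filter: "(\<Sum>i | i < nE \<and> r i = j. along i) = (\<Sum>i | i < nE \<and> r i = j \<and> straight_edge ell Phi i. c i *\<^sub>R T i 0)"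
    for r :: "nat \<Rightarrow> nat"
    unfolding along_def by (intro sum.mono_neutral_cong_right) auto
  show "Aplus nE tgt along j = (\<Sum>i | i < nE \<and> tgt i = j \<and> straight_edge ell Phi i. c i *\<^sub>R T i 0)"
    unfolding Aplus_def by (rule filter)
  moreover show "Aminus nE src along j = (\<Sum>i | i < nE \<and> src i = j \<and> straight_edge ell Phi i. c i *\<^sub>R T i 0)"
    unfolding Aminus_def by (rule filter)
  moreover have "(\<Sum>i | i < nE \<and> straight_edge ell Phi i. c i *\<^sub>R (if r i = j then T i 0 else 0))
      = (\<Sum>i | i < nE \<and> r i = j \<and> straight_edge ell Phi i. c i *\<^sub>R T i 0)" for r :: "nat \<Rightarrow> nat"
    by (intro sum.mono_neutral_cong_right) auto
  ultimately show "(\<Sum>i | i < nE \<and> straight_edge ell Phi i.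
             c i *\<^sub>R ((if tgt i = j then T i 0 else 0) - (if src i = j then T i 0 else 0)))
    = Aplus nE tgt along j - Aminus nE src along j"
    by (simp add: scaleR_diff_right sum_subtractf)
qed

lemma straight_incidence_norm_le:
  assumes balance: "Aplus nE tgt P j - Aminus nE src P j = 0"
    and R: "\<forall>i<nE. transverse_norm (ell i) (T i) (P i) \<le> R"
  shows "norm (\<Sum>i | i < nE \<and> straight_edge ell Phi i.
      (P i \<bullet> T i 0) *\<^sub>R ((if tgt i = j then T i 0 else 0) - (if src i = j then T i 0 else 0)))
    \<le> 2 * (real nE * R)"
proof -
  define along where "along = (\<lambda>i. if straight_edge ell Phi i then (P i \<bullet> T i 0) *\<^sub>R T i 0 else 0)"
  define e where "e i = P i - along i" for i
  have "Aplus nE tgt P j - Aminus nE src P j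
      = (Aplus nE tgt e j - Aminus nE src e j) + (Aplus nE tgt along j - Aminus nE src along j)"
    using Aplus_add[of nE tgt e along j] Aplus_add[of nE src e along j]
    by (simp add: e_def Aminus_eq_Aplus)
  then have "Aplus nE tgt along j - Aminus nE src along j = - (Aplus nE tgt e j - Aminus nE src e j)"
    using balance by (metis add.commute eq_neg_iff_add_eq_0)
  then have "norm (Aplus nE tgt along j - Aminus nE src along j) \<le> 2 * (\<Sum>i<nE. norm (e i))"
    by (simp only: norm_minus_cancel norm_incidence_le)
  also have "\<dots> \<le> 2 * (real nE * R)"
    using sum_bounded_above[of "{..<nE}" "\<lambda>i. norm (e i)" R] R norm_transverse_part
    by (simp add: e_def along_def)
  finally show ?thesis
    unfolding along_def by (simp only: incidence_sum_straight(1))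
qed

lemma straight_coeff_bound:
  assumes straight_indep: "\<And>c :: nat \<Rightarrow> real.
       (\<forall>j<nV. (\<Sum>i | i < nE \<and> tgt i = j \<and> straight_edge ell Phi i. c i *\<^sub>R tangent (Phi i) (ell i) 0)
              - (\<Sum>i | i < nE \<and> src i = j \<and> straight_edge ell Phi i. c i *\<^sub>R tangent (Phi i) (ell i) 0) = 0)
       \<Longrightarrow> (\<forall>i<nE. straight_edge ell Phi i \<longrightarrow> c i = 0)"
  shows "\<exists>K>0. \<forall>c i. i < nE \<and> straight_edge ell Phi i \<longrightarrow> \<bar>c i\<bar> \<le> K * (\<Sum>j<nV. norm
           (\<Sum>i | i < nE \<and> straight_edge ell Phi i.
              c i *\<^sub>R ((if tgt i = j then T i 0 else 0) - (if src i = j then T i 0 else 0))))"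
proof -
  define S where "S = {i. i < nE \<and> straight_edge ell Phi i}"
  define f where "f i j = (if tgt i = j then T i 0 else 0) - (if src i = j then T i 0 else 0)" for i j
  have "\<exists>K>0. \<forall>c. \<forall>i\<in>S. \<bar>c i\<bar> \<le> K * (\<Sum>j\<in>{..<nV}. norm (\<Sum>i\<in>S. c i *\<^sub>R f i j))"
  proof (rule injective_linear_combination_coeff_bound)
    fix c :: "nat \<Rightarrow> real"
    assume "\<forall>j\<in>{..<nV}. (\<Sum>i\<in>S. c i *\<^sub>R f i j) = 0"
    then have "\<forall>j<nV. (\<Sum>i | i < nE \<and> tgt i = j \<and> straight_edge ell Phi i. c i *\<^sub>R T i 0)
              - (\<Sum>i | i < nE \<and> src i = j \<and> straight_edge ell Phi i. c i *\<^sub>R T i 0) = 0"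
      unfolding S_def f_def incidence_sum_straight(1) incidence_sum_straight(2,3) by simp
    from straight_indep[OF this] show "\<forall>i\<in>S. c i = 0"
      by (simp add: S_def)
  qed (simp_all add: S_def)
  then show ?thesis by (simp add: S_def f_def)
qed

text \<open>Only the tangential components of P on straight edges are not controlled by
  \<open>transverse_norm\<close>; the vertex balance and the independence hypothesis control them.\<close>
lemma tangential_force_bound:
  assumes straight_indep: "\<And>c :: nat \<Rightarrow> real.
       (\<forall>j<nV. (\<Sum>i | i < nE \<and> tgt i = j \<and> straight_edge ell Phi i. c i *\<^sub>R tangent (Phi i) (ell i) 0)
              - (\<Sum>i | i < nE \<and> src i = j \<and> straight_edge ell Phi i. c i *\<^sub>R tangent (Phi i) (ell i) 0) = 0)
       \<Longrightarrow> (\<forall>i<nE. straight_edge ell Phi i \<longrightarrow> c i = 0)"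
  shows "\<exists>A>0. \<forall>P R. (\<forall>j<nV. Aplus nE tgt P j - Aminus nE src P j = 0) \<longrightarrow>
           (\<forall>i<nE. transverse_norm (ell i) (T i) (P i) \<le> R) \<longrightarrow> (\<forall>i<nE. norm (P i) \<le> A * R)"
proof -
  obtain K where K: "K > 0" and coeff: "\<And>c i. i < nE \<Longrightarrow> straight_edge ell Phi i \<Longrightarrow>
      \<bar>c i\<bar> \<le> K * (\<Sum>j<nV. norm (\<Sum>i | i < nE \<and> straight_edge ell Phi i.
        c i *\<^sub>R ((if tgt i = j then T i 0 else 0) - (if src i = j then T i 0 else 0))))"
    using straight_coeff_bound[OF straight_indep] by blast
  define A where "A = 1 + K * (real nV * (2 * real nE))"
  have "norm (P i) \<le> A * R"
    if balance: "\<forall>j<nV. Aplus nE tgt P j - Aminus nE src P j = 0"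
      and R: "\<forall>i<nE. transverse_norm (ell i) (T i) (P i) \<le> R" and i: "i < nE" for P R i
  proof -
    have R0: "0 \<le> R"
      using R[rule_format, OF edges_exist] norm_ge_zero order_trans
      unfolding transverse_norm_def by (smt (verit))
    have incidence: "(\<Sum>j<nV. norm (\<Sum>i | i < nE \<and> straight_edge ell Phi i.
        (P i \<bullet> T i 0) *\<^sub>R ((if tgt i = j then T i 0 else 0) - (if src i = j then T i 0 else 0))))
      \<le> real nV * (2 * (real nE * R))"
      using sum_bounded_above[of "{..<nV}" _ "2 * (real nE * R)"] straight_incidence_norm_le[OF _ R] balance
      by simp
    have "\<bar>P i \<bullet> T i 0\<bar> \<le> K * (real nV * (2 * real nE)) * R" if "straight_edge ell Phi i"
    proof -
      have "\<bar>P i \<bullet> T i 0\<bar> \<le> K * (real nV * (2 * (real nE * R)))"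
        by (rule order_trans[OF coeff[OF i that] mult_left_mono[OF incidence]]) (use K in simp)
      then show ?thesis by (simp add: mult.assoc)
    qed
    moreover have "norm (P i) \<le> transverse_norm (ell i) (T i) (P i)
        + (if straight_edge ell Phi i then \<bar>P i \<bullet> T i 0\<bar> else 0)"
      using norm_transverse_part[OF i, of "P i"] norm_triangle_sub[of "P i" "(P i \<bullet> T i 0) *\<^sub>R T i 0"]
      by (auto simp: norm_tangent_start[OF i])
    moreover have "transverse_norm (ell i) (T i) (P i) \<le> R" using R i by simp
    moreover have "0 \<le> K * (real nV * (2 * real nE)) * R"
      using K R0 by simp
    ultimately show ?thesis
      by (cases "straight_edge ell Phi i") (simp_all add: A_def algebra_simps)
  qed
  moreover have "A > 0" using K by (simp add: A_def add_pos_nonneg)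
  ultimately show ?thesis by blast
qed

lemma sum_vertex_balance:
  "(\<Sum>j<nV. Aplus nE tgt X j - Aminus nE src Y j) = (\<Sum>i<nE. X i - Y i)"
  by (simp add: sum_subtractf Aminus_eq_Aplus sum_Aplus tgt_lt src_lt)

end

locale stent_kernel = stent +
  fixes q p :: "nat \<Rightarrow> real \<Rightarrow> real^3" and Pp Pm Qp Qm :: "nat \<Rightarrow> real^3" and \<alpha> \<beta> :: "real^3"
  assumes L2: "\<forall>i<nE. L2_on (ell i) (q i) \<and> L2_on (ell i) (p i)"
    and kernel: "\<forall>v dv w dw :: nat \<Rightarrow> real \<Rightarrow> real^3. \<forall>V W :: nat \<Rightarrow> real^3.
      (\<forall>i<nE. H1_on (ell i) (v i) (dv i) \<and> H1_on (ell i) (w i) (dw i)) \<longrightarrow>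
      b_form nV nE src tgt ell Phi q p Pp Pm Qp Qm \<alpha> \<beta> v dv w dw V W = 0"
begin

lemma edge_kernel:
  assumes k: "k < nE"
  shows "edge_kernel (ell k) (Phi k) (T k) (q k) (p k) (Pp k) (Pm k) (Qp k) (Qm k) \<alpha> \<beta>"
proof -
  have "b_edge_form (ell k) (T k) (q k) (p k) (Pp k) (Pm k) (Qp k) (Qm k) \<alpha> \<beta> v dv w dw = 0"
    if "H1_on (ell k) v dv" "H1_on (ell k) w dw" for v dv w dw
    using kernel[rule_format, of "\<lambda>i. if i = k then v else (\<lambda>s. 0)" "\<lambda>i. if i = k then dv else (\<lambda>s. 0)"
        "\<lambda>i. if i = k then w else (\<lambda>s. 0)" "\<lambda>i. if i = k then dw else (\<lambda>s. 0)" "\<lambda>j. 0" "\<lambda>j. 0"]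
      that H1_on_const b_form_single_edge[OF k]
    by auto
  with edge_regular[OF k] L2 k show ?thesis
    by (simp add: edge_kernel_def edge_kernel_axioms_def)
qed

lemma vertex_force_balance:
  assumes j: "j < nV"
  shows "Aplus nE tgt Pp j - Aminus nE src Pm j = 0"
proof -
  have "(Aplus nE tgt Pp j - Aminus nE src Pm j) \<bullet> e = 0" for e
    using kernel[rule_format, of "\<lambda>i s. 0" "\<lambda>i s. 0" "\<lambda>i s. 0" "\<lambda>i s. 0" "\<lambda>j'. if j' = j then e else 0" "\<lambda>j. 0"]
    by (simp add: b_form_vertex_forces[OF j] H1_on_const)
  then show ?thesis by (metis inner_eq_zero_iff)
qed

lemma vertex_moment_balance:
  assumes j: "j < nV"
  shows "Aplus nE tgt Qp j - Aminus nE src Qm j = 0"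
proof -
  have "(Aplus nE tgt Qp j - Aminus nE src Qm j) \<bullet> e = 0" for e
    using kernel[rule_format, of "\<lambda>i s. 0" "\<lambda>i s. 0" "\<lambda>i s. 0" "\<lambda>i s. 0" "\<lambda>j. 0" "\<lambda>j'. if j' = j then e else 0"]
    by (simp add: b_form_vertex_moments[OF j] H1_on_const)
  then show ?thesis by (metis inner_eq_zero_iff)
qed

lemma total_length_pos: "0 < (\<Sum>i<nE. ell i)"
  using edges_exist ell_pos by (intro sum_pos) auto

lemma alpha_eq_0: "\<alpha> = 0"
proof -
  have "0 = (\<Sum>j<nV. Aplus nE tgt Pp j - Aminus nE src Pm j)"
    using vertex_force_balance by simp
  also have "\<dots> = (\<Sum>i<nE. - (ell i *\<^sub>R \<alpha>))"
    unfolding sum_vertex_balance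
  proof (intro sum.cong refl)
    fix i assume "i \<in> {..<nE}"
    then have "Pp i - Pm i + ell i *\<^sub>R \<alpha> = 0"
      using edge_kernel.force_balance[OF edge_kernel] by simp
    then show "Pp i - Pm i = - (ell i *\<^sub>R \<alpha>)"
      by (simp add: eq_neg_iff_add_eq_0)
  qed
  also have "\<dots> = - ((\<Sum>i<nE. ell i) *\<^sub>R \<alpha>)"
    by (simp add: sum_negf scaleR_sum_left)
  finally show ?thesis using total_length_pos by simp
qed

lemma Pm_eq_Pp: "k < nE \<Longrightarrow> Pm k = Pp k"
  using edge_kernel.force_balance[OF edge_kernel, of k] alpha_eq_0 by simp

lemma beta_eq_0: "\<beta> = 0"
proof -
  have moments: "Qp k - Qm k = cross3 (Pp k) (Vpos (tgt k)) - cross3 (Pp k) (Vpos (src k)) - ell k *\<^sub>R \<beta>"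
    if "k < nE" for k
    using edge_kernel.moment_balance[OF edge_kernel[OF that] alpha_eq_0 Pm_eq_Pp[OF that]] that
    by (simp add: Phi_start Phi_end Cross3.right_diff_distrib)
  have "Aminus nE src Pm j = Aplus nE src Pp j" for j
    unfolding Aminus_def Aplus_def using Pm_eq_Pp by (intro sum.cong) auto
  then have "(\<Sum>j<nV. cross3 (Aplus nE tgt Pp j - Aminus nE src Pm j) (Vpos j))
      = (\<Sum>j<nV. cross3 (Aplus nE tgt Pp j) (Vpos j)) - (\<Sum>j<nV. cross3 (Aplus nE src Pp j) (Vpos j))"
    by (simp add: Cross3.left_diff_distrib sum_subtractf)
  also have "\<dots> = (\<Sum>k<nE. cross3 (Pp k) (Vpos (tgt k)) - cross3 (Pp k) (Vpos (src k)))"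
    by (simp add: sum_cross3_Aplus tgt_lt src_lt sum_subtractf)
  finally have "(\<Sum>k<nE. cross3 (Pp k) (Vpos (tgt k)) - cross3 (Pp k) (Vpos (src k)))
      = (\<Sum>j<nV. cross3 (Aplus nE tgt Pp j - Aminus nE src Pm j) (Vpos j))" ..
  also have "\<dots> = 0" using vertex_force_balance by simp
  finally have twist: "(\<Sum>k<nE. cross3 (Pp k) (Vpos (tgt k)) - cross3 (Pp k) (Vpos (src k))) = 0" .
  have "0 = (\<Sum>j<nV. Aplus nE tgt Qp j - Aminus nE src Qm j)"
    using vertex_moment_balance by simp
  also have "\<dots> = - ((\<Sum>i<nE. ell i) *\<^sub>R \<beta>)"
    unfolding sum_vertex_balance using twist
    by (simp add: moments sum_subtractf scaleR_sum_left)
  finally show ?thesis using total_length_pos by simp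
qed

lemma edge_moment_estimates:
  assumes k: "k < nE"
  shows "ramp_estimates (ell k) (transverse_norm (ell k) (T k) (Pp k))
           (\<lambda>b. Qp k - cross3 (Pp k) (Phi k (ell k) - Phi k b)) (integral {0..ell k} (\<lambda>s. norm (q k s)^2))"
    and "Qm k = Qp k - cross3 (Pp k) (Phi k (ell k) - Phi k 0)"
    and "integral {0..ell k} (\<lambda>s. norm (p k s)^2) = ell k * norm (Pp k)^2"
  using edge_kernel.ramp_estimates_moment[OF edge_kernel[OF k] alpha_eq_0 Pm_eq_Pp[OF k] beta_eq_0]
    edge_kernel.moment_balance[OF edge_kernel[OF k] alpha_eq_0 Pm_eq_Pp[OF k]]
    edge_kernel.integral_norm_sq_force[OF edge_kernel[OF k] alpha_eq_0 Pm_eq_Pp[OF k]] beta_eq_0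
  by (simp_all add: algebra_simps)

lemma normV_sq_le:
  assumes "\<And>k. k < nE \<Longrightarrow> norm (Pp k)^2 \<le> B \<and> norm (Qp k)^2 \<le> B \<and> norm (Qm k)^2 \<le> B"
  shows "normV_sq nE ell q p Pp Pm Qp Qm \<alpha> \<beta>
    \<le> (\<Sum>k<nE. integral {0..ell k} (\<lambda>s. norm (q k s)^2)) + (\<Sum>k<nE. ell k + 4) * B"
proof -
  have "integral {0..ell k} (\<lambda>s. norm (p k s)^2) + norm (Pp k)^2 + norm (Pm k)^2 + norm (Qp k)^2
      + norm (Qm k)^2 \<le> (ell k + 4) * B" if k: "k < nE" for k
  proof -
    have "ell k * norm (Pp k)^2 \<le> ell k * B"
      using assms[OF k] ell_pos[OF k] by (intro mult_left_mono) auto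
    then show ?thesis
      using assms[OF k] unfolding edge_moment_estimates(3)[OF k] Pm_eq_Pp[OF k] distrib_right
      by linarith
  qed
  then show ?thesis
    unfolding normV_sq_def alpha_eq_0 beta_eq_0 sum_distrib_right
    by (simp add: sum.distrib[symmetric] add.assoc) (intro sum_mono add_left_mono, simp)
qed

lemma force_balance_Pp: "j < nV \<Longrightarrow> Aplus nE tgt Pp j - Aminus nE src Pp j = 0"
proof -
  have "Aminus nE src Pm j = Aminus nE src Pp j"
    unfolding Aminus_def using Pm_eq_Pp by (intro sum.cong) auto
  then show "j < nV \<Longrightarrow> ?thesis" using vertex_force_balance[of j] by simp
qed

lemma normV_sq_bound:
  assumes control: "\<And>k. k < nE \<Longrightarrow> 0 < Ce k \<and> Ce k \<le> Cm \<and> ramp_controlled (ell k) (Phi k) (T k) (Ce k)"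
    and A_bound: "\<And>P R. \<forall>j<nV. Aplus nE tgt P j - Aminus nE src P j = 0 \<Longrightarrow>
      \<forall>i<nE. transverse_norm (ell i) (T i) (P i) \<le> R \<Longrightarrow> \<forall>i<nE. norm (P i) \<le> A * R"
  shows "normV_sq nE ell q p Pp Pm Qp Qm \<alpha> \<beta>
    \<le> (1 + (\<Sum>k<nE. ell k + 4) * ((A^2 + 1) * Cm)) * (\<Sum>k<nE. integral {0..ell k} (\<lambda>s. norm (q k s)^2))"
proof -
  define N where "N k = integral {0..ell k} (\<lambda>s. norm (q k s)^2)" for k
  define NN where "NN = (\<Sum>k<nE. N k)"
  have N: "0 \<le> N k" if "k < nE" for k
    unfolding N_def using L2 that by (simp add: L2_on_norm_sq_integral_nonneg)
  then have NN: "0 \<le> NN" unfolding NN_def by (intro sum_nonneg) auto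
  have Cm: "0 \<le> Cm" using control[OF edges_exist] by linarith
  have CN: "Ce k * N k \<le> Cm * NN" if k: "k < nE" for k
    using control[OF k] N k unfolding NN_def
    by (intro mult_mono member_le_sum) (auto intro: sum_nonneg less_imp_le)
  have edge: "(transverse_norm (ell k) (T k) (Pp k))^2 \<le> Cm * NN \<and> norm (Qp k)^2 \<le> Cm * NN \<and>
      norm (Qm k)^2 \<le> Cm * NN" if k: "k < nE" for k
    using control[OF k] edge_moment_estimates[OF k] CN[OF k] unfolding N_def[symmetric] ramp_controlled_def
    by fastforce
  have "norm (Pp k) \<le> A * sqrt (Cm * NN)" if "k < nE" for k
    using A_bound[of Pp "sqrt (Cm * NN)"] force_balance_Pp edge that by (auto intro: real_le_rsqrt)
  then have "norm (Pp k)^2 \<le> A^2 * (Cm * NN)" if "k < nE" for k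
    using power_mono[OF \<open>k < nE \<Longrightarrow> norm (Pp k) \<le> _\<close>[OF that] norm_ge_zero, of 2] Cm NN
    by (simp add: power_mult_distrib)
  moreover have "A^2 * (Cm * NN) \<le> (A^2 + 1) * Cm * NN" "Cm * NN \<le> (A^2 + 1) * Cm * NN"
    using Cm NN by (simp_all add: algebra_simps)
  ultimately have "normV_sq nE ell q p Pp Pm Qp Qm \<alpha> \<beta> \<le> NN + (\<Sum>k<nE. ell k + 4) * ((A^2 + 1) * Cm * NN)"
    using edge unfolding NN_def N_def by (intro normV_sq_le) (meson order_trans)
  then show ?thesis by (simp add: NN_def N_def algebra_simps)
qed

end

lemma (in stent) kernel_norm_bound:
  assumes straight_indep: "\<And>c :: nat \<Rightarrow> real.
       (\<forall>j<nV. (\<Sum>i | i < nE \<and> tgt i = j \<and> straight_edge ell Phi i. c i *\<^sub>R tangent (Phi i) (ell i) 0)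
              - (\<Sum>i | i < nE \<and> src i = j \<and> straight_edge ell Phi i. c i *\<^sub>R tangent (Phi i) (ell i) 0) = 0)
       \<Longrightarrow> (\<forall>i<nE. straight_edge ell Phi i \<longrightarrow> c i = 0)"
  shows "\<exists>C>0. \<forall>q p Pp Pm Qp Qm \<alpha> \<beta>. stent_kernel nV nE src tgt Vpos ell Phi Q H q p Pp Pm Qp Qm \<alpha> \<beta> \<longrightarrow>
    normV_sq nE ell q p Pp Pm Qp Qm \<alpha> \<beta> \<le> C * (\<Sum>k<nE. integral {0..ell k} (\<lambda>s. norm (q k s)^2))"
proof -
  have "\<forall>k. \<exists>C. k < nE \<longrightarrow> C > 0 \<and> ramp_controlled (ell k) (Phi k) (T k) C"
    using regular_curve.ramp_controlled_exists[OF edge_regular] by blast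
  from choice[OF this] obtain Ce
    where Ce: "\<And>k. k < nE \<Longrightarrow> Ce k > 0 \<and> ramp_controlled (ell k) (Phi k) (T k) (Ce k)"
    by blast
  obtain A where A: "\<And>P R. \<forall>j<nV. Aplus nE tgt P j - Aminus nE src P j = 0 \<Longrightarrow>
      \<forall>i<nE. transverse_norm (ell i) (T i) (P i) \<le> R \<Longrightarrow> \<forall>i<nE. norm (P i) \<le> A * R"
    using tangential_force_bound[OF straight_indep] by blast
  define Cm where "Cm = (\<Sum>k<nE. Ce k)"
  have nonneg: "0 \<le> ell k + 4" "0 \<le> Ce k" if "k < nE" for k
    using ell_pos[OF that] Ce[OF that] by simp_all
  have "Ce k \<le> Cm" if "k < nE" for k
    unfolding Cm_def using nonneg that by (intro member_le_sum) auto
  then have "normV_sq nE ell q p Pp Pm Qp Qm \<alpha> \<beta>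
      \<le> (1 + (\<Sum>k<nE. ell k + 4) * ((A^2 + 1) * Cm)) * (\<Sum>k<nE. integral {0..ell k} (\<lambda>s. norm (q k s)^2))"
    if "stent_kernel nV nE src tgt Vpos ell Phi Q H q p Pp Pm Qp Qm \<alpha> \<beta>" for q p Pp Pm Qp Qm \<alpha> \<beta>
    using stent_kernel.normV_sq_bound[OF that] Ce A by blast
  moreover have "0 < 1 + (\<Sum>k<nE. ell k + 4) * ((A^2 + 1) * Cm)"
    unfolding Cm_def using nonneg by (intro add_pos_nonneg mult_nonneg_nonneg sum_nonneg) auto
  ultimately show ?thesis by blast
qed

theorem lemma3p5:
  fixes nV nE :: nat and src tgt :: "nat \<Rightarrow> nat" and Vpos :: "nat \<Rightarrow> real^3"
    and ell :: "nat \<Rightarrow> real" and Phi :: "nat \<Rightarrow> real \<Rightarrow> real^3"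
    and Q :: "nat \<Rightarrow> real \<Rightarrow> real^3^3" and H :: "nat \<Rightarrow> real^3^3"
  assumes geom: "stent_geometry nV nE src tgt Vpos ell Phi Q H"
    and straight_indep: "\<And>c :: nat \<Rightarrow> real.
       (\<forall>j<nV. (\<Sum>i | i < nE \<and> tgt i = j \<and> straight_edge ell Phi i. c i *\<^sub>R tangent (Phi i) (ell i) 0)
              - (\<Sum>i | i < nE \<and> src i = j \<and> straight_edge ell Phi i. c i *\<^sub>R tangent (Phi i) (ell i) 0) = 0)
       \<Longrightarrow> (\<forall>i<nE. straight_edge ell Phi i \<longrightarrow> c i = 0)"
  shows "\<exists>ca > 0. \<forall>q p :: nat \<Rightarrow> real \<Rightarrow> real^3. \<forall>Pp Pm Qp Qm :: nat \<Rightarrow> real^3. \<forall>\<alpha> \<beta> :: real^3.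
           (\<forall>i<nE. L2_on (ell i) (q i) \<and> L2_on (ell i) (p i)) \<longrightarrow>
           (\<forall>v dv w dw :: nat \<Rightarrow> real \<Rightarrow> real^3. \<forall>V W :: nat \<Rightarrow> real^3.
              (\<forall>i<nE. H1_on (ell i) (v i) (dv i) \<and> H1_on (ell i) (w i) (dw i)) \<longrightarrow>
              b_form nV nE src tgt ell Phi q p Pp Pm Qp Qm \<alpha> \<beta> v dv w dw V W = 0) \<longrightarrow>
           a_form nE ell Q H q q \<ge> ca * normV_sq nE ell q p Pp Pm Qp Qm \<alpha> \<beta>"
proof -
  interpret stent nV nE src tgt Vpos ell Phi Q H by (rule stent.intro[OF geom])
  obtain lam where lam: "lam > 0" and coercive: "\<And>q. \<forall>i<nE. L2_on (ell i) (q i) \<Longrightarrow>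
      lam * (\<Sum>i<nE. integral {0..ell i} (\<lambda>s. norm (q i s)^2)) \<le> a_form nE ell Q H q q"
    using a_form_coercive by blast
  obtain C where C: "C > 0" and kernel_bound: "\<And>q p Pp Pm Qp Qm \<alpha> \<beta>.
      stent_kernel nV nE src tgt Vpos ell Phi Q H q p Pp Pm Qp Qm \<alpha> \<beta> \<Longrightarrow>
      normV_sq nE ell q p Pp Pm Qp Qm \<alpha> \<beta> \<le> C * (\<Sum>k<nE. integral {0..ell k} (\<lambda>s. norm (q k s)^2))"
    using kernel_norm_bound[OF straight_indep] by blast
  have "lam / C * normV_sq nE ell q p Pp Pm Qp Qm \<alpha> \<beta> \<le> a_form nE ell Q H q q"
    if kernel: "stent_kernel nV nE src tgt Vpos ell Phi Q H q p Pp Pm Qp Qm \<alpha> \<beta>" for q p Pp Pm Qp Qm \<alpha> \<beta>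
  proof -
    have "lam / C * normV_sq nE ell q p Pp Pm Qp Qm \<alpha> \<beta>
        \<le> lam * (\<Sum>k<nE. integral {0..ell k} (\<lambda>s. norm (q k s)^2))"
      using kernel_bound[OF kernel] lam C by (simp add: field_simps mult_left_mono)
    also have "\<dots> \<le> a_form nE ell Q H q q"
      using coercive stent_kernel.L2[OF kernel] by blast
    finally show ?thesis .
  qed
  then show ?thesis
    using lam C geom by (intro exI[of _ "lam / C"]) (auto simp: stent_kernel_def stent_kernel_axioms_def stent_def)
qed

end
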